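(* Let $G$ be a cyclic union of component graphs $G_1,\dots,G_m$, and fix legal parameters $\varepsilon,\delta$; let $W=W(G,\varepsilon,\delta)$ and $W_{G_i}=W(G_i,\varepsilon,\delta)$. Then: (i) If some $G_i$ does not have a full-support fixed point, then $G$ does not have a full-support fixed point. (ii) If all $G_i$ have full-support fixed points, and there exists $j$ such that $G_j$ has uniform in-degree and its full-support fixed point is unstable, then $G$ has a full-support fixed point that is unstable. (iii) If all $G_i$ are cliques, then $W$ has a unique fixed point, which has full support, and this fixed point is unstable. In particular, in all these cases $G$ is not a stable motif.
   Context: For a simple directed graph $H$ on $[h]$ and legal parameters ($\delta>0$, $0<\varepsilon<\frac{\delta}{\delta+1}$), the CTLN $W(H,\varepsilon,\delta)$ is the $h\times h$ matrix with zero diagonal, $W_{ij}=-1+\varepsilon$ if $j\to i$ in $H$, $W_{ij}=-1-\delta$ if $i\ne j$ and $j\not\to i$; its dynamics are $\dot x_i=-x_i+[\sum_jW_{ij}x_j+\theta]_+$ with $\theta>0$. CTLNs are assumed nondegenerate ($\det(I-W_\sigma)\ne0$ for all principal submatrices and all Cramer determinants nonzero). A fixed point $x^*\ge0$ has support $\{i:x^*_i>0\}$; a fixed point with support $\sigma$ is stable iff all eigenvalues of $I-W_\sigma$ have positive real part, otherwise unstable. "$H$ has a full-support fixed point" means its CTLN has a fixed point with support all of $[h]$. $H$ is a stable motif if it has a full-support fixed point that is stable. A cyclic union of $G_1,\dots,G_m$ is the graph on the disjoint union of their vertex sets, keeping all edges within each $G_i$, adding all edges from every node of $G_i$ to every node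 of $G_{i+1}$ (indices mod $m$), and no other edges. A graph has uniform in-degree if all its nodes have the same in-degree. A clique is a graph in which every pair of nodes is bidirectionally connected. *)

theory Defs
  imports Complex_Main "HOL-Combinatorics.Permutations"
begin

text \<open>Graphs: a finite vertex set V :: 'a set and an edge relation E, where
  E j i means the edge j -> i. A subgraph on a vertex subset S is the induced
  graph (S, E restricted to S).\<close>

definition legal_params :: "real \<Rightarrow> real \<Rightarrow> bool" where
  "legal_params \<epsilon> \<delta> \<longleftrightarrow> \<delta> > 0 \<and> 0 < \<epsilon> \<and> \<epsilon> < \<delta> / (\<delta> + 1)"

definition ctln :: "('a \<Rightarrow> 'a \<Rightarrow> bool) \<Rightarrow> real \<Rightarrow> real \<Rightarrow> 'a \<Rightarrow> 'a \<Rightarrow> real" where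
  "ctln E \<epsilon> \<delta> i j = (if i = j then 0 else if E j i then -1 + \<epsilon> else -1 - \<delta>)"

definition IminusW :: "('a \<Rightarrow> 'a \<Rightarrow> bool) \<Rightarrow> real \<Rightarrow> real \<Rightarrow> 'a \<Rightarrow> 'a \<Rightarrow> real" where
  "IminusW E \<epsilon> \<delta> i j = (if i = j then 1 else 0) - ctln E \<epsilon> \<delta> i j"

definition det_on :: "'a set \<Rightarrow> ('a \<Rightarrow> 'a \<Rightarrow> real) \<Rightarrow> real" where
  "det_on S A = (\<Sum>p\<in>{p. p permutes S}. of_int (sign p) * (\<Prod>i\<in>S. A i (p i)))"

definition replace_col :: "('a \<Rightarrow> 'a \<Rightarrow> real) \<Rightarrow> 'a \<Rightarrow> ('a \<Rightarrow> real) \<Rightarrow> 'a \<Rightarrow> 'a \<Rightarrow> real" where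
  "replace_col A k b i j = (if j = k then b i else A i j)"

definition nondegenerate ::
  "'a set \<Rightarrow> ('a \<Rightarrow> 'a \<Rightarrow> bool) \<Rightarrow> real \<Rightarrow> real \<Rightarrow> real \<Rightarrow> bool" where
  "nondegenerate V E \<epsilon> \<delta> \<theta> \<longleftrightarrow>
     (\<forall>\<sigma>. \<sigma> \<subseteq> V \<longrightarrow> \<sigma> \<noteq> {} \<longrightarrow>
        det_on \<sigma> (IminusW E \<epsilon> \<delta>) \<noteq> 0 \<and>
        (\<forall>k\<in>\<sigma>. det_on \<sigma> (replace_col (IminusW E \<epsilon> \<delta>) k (\<lambda>_. \<theta>)) \<noteq> 0))"

text \<open>Fixed point x >= 0 of dx_i/dt = -x_i + [sum_j W_ij x_j + theta]_+ on vertex set V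
  (x vanishes outside V).\<close>
definition ctln_fixed_point ::
  "'a set \<Rightarrow> ('a \<Rightarrow> 'a \<Rightarrow> bool) \<Rightarrow> real \<Rightarrow> real \<Rightarrow> real \<Rightarrow> ('a \<Rightarrow> real) \<Rightarrow> bool" where
  "ctln_fixed_point V E \<epsilon> \<delta> \<theta> x \<longleftrightarrow>
     (\<forall>i. i \<notin> V \<longrightarrow> x i = 0) \<and>
     (\<forall>i\<in>V. x i \<ge> 0 \<and> x i = max 0 ((\<Sum>j\<in>V. ctln E \<epsilon> \<delta> i j * x j) + \<theta>))"

definition supp :: "'a set \<Rightarrow> ('a \<Rightarrow> real) \<Rightarrow> 'a set" where
  "supp V x = {i\<in>V. x i > 0}"

definition is_eigenvalue_on :: "'a set \<Rightarrow> ('a \<Rightarrow> 'a \<Rightarrow> real) \<Rightarrow> complex \<Rightarrow> bool" where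
  "is_eigenvalue_on S A lam \<longleftrightarrow>
     (\<exists>v :: 'a \<Rightarrow> complex. (\<exists>i\<in>S. v i \<noteq> 0) \<and>
        (\<forall>i\<in>S. (\<Sum>j\<in>S. complex_of_real (A i j) * v j) = lam * v i))"

definition stable_fp ::
  "'a set \<Rightarrow> ('a \<Rightarrow> 'a \<Rightarrow> bool) \<Rightarrow> real \<Rightarrow> real \<Rightarrow> ('a \<Rightarrow> real) \<Rightarrow> bool" where
  "stable_fp V E \<epsilon> \<delta> x \<longleftrightarrow>
     (\<forall>lam. is_eigenvalue_on (supp V x) (IminusW E \<epsilon> \<delta>) lam \<longrightarrow> Re lam > 0)"

definition has_full_support_fp ::
  "'a set \<Rightarrow> ('a \<Rightarrow> 'a \<Rightarrow> bool) \<Rightarrow> real \<Rightarrow> real \<Rightarrow> real \<Rightarrow> bool" where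
  "has_full_support_fp V E \<epsilon> \<delta> \<theta> \<longleftrightarrow>
     (\<exists>x. ctln_fixed_point V E \<epsilon> \<delta> \<theta> x \<and> supp V x = V)"

definition stable_motif ::
  "'a set \<Rightarrow> ('a \<Rightarrow> 'a \<Rightarrow> bool) \<Rightarrow> real \<Rightarrow> real \<Rightarrow> real \<Rightarrow> bool" where
  "stable_motif V E \<epsilon> \<delta> \<theta> \<longleftrightarrow>
     (\<exists>x. ctln_fixed_point V E \<epsilon> \<delta> \<theta> x \<and> supp V x = V \<and> stable_fp V E \<epsilon> \<delta> x)"

definition simple_digraph :: "'a set \<Rightarrow> ('a \<Rightarrow> 'a \<Rightarrow> bool) \<Rightarrow> bool" where
  "simple_digraph V E \<longleftrightarrow> finite V \<and> V \<noteq> {} \<and> (\<forall>i\<in>V. \<not> E i i)"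

definition uniform_in_degree :: "'a set \<Rightarrow> ('a \<Rightarrow> 'a \<Rightarrow> bool) \<Rightarrow> bool" where
  "uniform_in_degree V E \<longleftrightarrow> (\<exists>d. \<forall>i\<in>V. card {j\<in>V. E j i} = d)"

definition is_clique :: "'a set \<Rightarrow> ('a \<Rightarrow> 'a \<Rightarrow> bool) \<Rightarrow> bool" where
  "is_clique V E \<longleftrightarrow> (\<forall>i\<in>V. \<forall>j\<in>V. i \<noteq> j \<longrightarrow> E i j)"

definition cyclic_union ::
  "'a set \<Rightarrow> ('a \<Rightarrow> 'a \<Rightarrow> bool) \<Rightarrow> nat \<Rightarrow> (nat \<Rightarrow> 'a set) \<Rightarrow> bool" where
  "cyclic_union V E m C \<longleftrightarrow>
     (\<forall>k<m. C k \<noteq> {}) \<and>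
     (\<forall>k<m. \<forall>l<m. k \<noteq> l \<longrightarrow> C k \<inter> C l = {}) \<and>
     (\<Union>k<m. C k) = V \<and>
     (\<forall>k<m. \<forall>l<m. k \<noteq> l \<longrightarrow>
        (\<forall>j\<in>C k. \<forall>i\<in>C l. E j i \<longleftrightarrow> l = Suc k mod m))"

end

(*
  Seen from a neuron of the component C l, every other component acts only through its
  total activity: with weight -1 + eps for the preceding component and -1 - delta for all
  others.  So on C l a full-support fixed point of the cyclic union solves the fixed point
  equations of the component with a shifted positive threshold, and rescaling gives (i).
  Conversely, rescaled full-support fixed points of the components glue together as soon as
  their total activities solve a cyclic recurrence w l = b l * (1 - w (l - 1)) with all
  b l > 1, which always has a solution in (0, 1).

  In (ii) uniform in-degree makes the row sums of the component's I - W
  constant, so a left eigenvector for an eigenvalue with nonpositive real part sums to zero;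
  extended by zero it is a left eigenvector of the whole network.  In (iii) block-constant
  vectors reduce I - W to an m x m quotient matrix N with (tr N)^2 < tr (N^2), which is
  impossible if all eigenvalues have positive real part.  Every fixed point of a cyclic union
  of cliques has full support, and the only block-balanced solution of the homogeneous system
  is zero, which gives uniqueness.
*)

theory Submission
  imports Defs "Jordan_Normal_Form.Schur_Decomposition"
begin

section \<open>Cyclic recurrences\<close>

definition cyc_pred :: "nat \<Rightarrow> nat \<Rightarrow> nat" where
  "cyc_pred m l = (l + m - 1) mod m"

lemma cyc_pred_less: "0 < m \<Longrightarrow> cyc_pred m l < m"
  by (simp add: cyc_pred_def)

lemma cyc_pred_eq: "l < m \<Longrightarrow> cyc_pred m l = (if l = 0 then m - 1 else l - 1)"
proof (cases l)
  case (Suc k)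
  moreover assume "l < m"
  moreover have "l + m - 1 = k + m" using Suc by simp
  ultimately show ?thesis by (simp add: cyc_pred_def)
qed (simp add: cyc_pred_def)

lemma cyc_pred_Suc_mod:
  assumes m: "0 < m"
  shows "cyc_pred m (Suc l mod m) = l mod m"
proof (cases "Suc (l mod m) = m")
  case False
  moreover have "l mod m < m" using m by simp
  ultimately have "Suc (l mod m) < m" by simp
  then show ?thesis by (simp add: mod_Suc False cyc_pred_eq)
qed (use m in \<open>simp add: mod_Suc cyc_pred_eq\<close>)

lemma Suc_cyc_pred_mod: "l < m \<Longrightarrow> Suc (cyc_pred m l) mod m = l"
  by (auto simp: cyc_pred_eq)

lemma cyc_pred_neq: "2 \<le> m \<Longrightarrow> l < m \<Longrightarrow> cyc_pred m l \<noteq> l"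
  by (auto simp: cyc_pred_eq)

lemma cyc_pred_cyc_pred_neq: "3 \<le> m \<Longrightarrow> l < m \<Longrightarrow> cyc_pred m (cyc_pred m l) \<noteq> l"
  by (auto simp: cyc_pred_eq)

lemma cyc_pred_surj: "k < m \<Longrightarrow> \<exists>l<m. cyc_pred m l = k"
  using cyc_pred_Suc_mod[of m k] by (intro exI[of _ "Suc k mod m"]) auto

lemma bij_betw_cyc_pred: "bij_betw (cyc_pred m) {..<m} {..<m}"
proof -
  have "cyc_pred m ` {..<m} = {..<m}"
    using cyc_pred_less cyc_pred_surj by fastforce
  then show ?thesis
    by (simp add: bij_betw_def eq_card_imp_inj_on)
qed

lemma sum_cyc_pred: "(\<Sum>l<m. g (cyc_pred m l)) = (\<Sum>l<m. g l)"
  using sum.reindex_bij_betw[OF bij_betw_cyc_pred] .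

lemma cyc_pred_mono_imp_eq:
  fixes g :: "nat \<Rightarrow> 'a :: ordered_cancel_comm_monoid_add"
  assumes "\<forall>l<m. g (cyc_pred m l) \<le> g l"
  shows "\<forall>l<m. g (cyc_pred m l) = g l"
proof (rule ccontr)
  assume "\<not> ?thesis"
  with assms have "(\<Sum>l<m. g (cyc_pred m l)) < (\<Sum>l<m. g l)"
    by (intro sum_strict_mono_ex1) (auto simp: order_less_le)
  then show False by (simp add: sum_cyc_pred)
qed

lemma cyc_pred_induct:
  assumes k: "k < m" and base: "P k" and step: "\<forall>l<m. P (cyc_pred m l) \<longrightarrow> P l"
  shows "\<forall>l<m. P l"
proof -
  have "P ((k + j) mod m)" for j
  proof (induction j)
    case (Suc j)
    with k step cyc_pred_Suc_mod[of m "k + j"] show ?case by simp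
  qed (use k base in simp)
  moreover have "(k + (l + m - k)) mod m = l" if "l < m" for l
    using k that by simp
  ultimately show ?thesis by metis
qed

text \<open>The distance to \<open>[0, 1]\<close> never decreases along the recurrence, and it increases
  strictly after a nonpositive term.\<close>
lemma cyclic_recurrence_in_unit_interval:
  fixes w b :: "nat \<Rightarrow> real"
  assumes b: "\<forall>l<m. b l > 1" and w: "\<forall>l<m. w l = b l * (1 - w (cyc_pred m l))"
  shows "\<forall>l<m. 0 < w l \<and> w l < 1"
proof -
  define dist where "dist x = max (max (- x) (x - 1)) 0" for x :: real
  have grow: "dist (w (cyc_pred m l)) \<le> dist (w l) \<and>
      (w (cyc_pred m l) \<le> 0 \<longrightarrow> dist (w (cyc_pred m l)) < dist (w l))" if l: "l < m" for l
  proof -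
    let ?p = "w (cyc_pred m l)"
    have wl: "w l = b l * (1 - ?p)" and bl: "b l > 1" using w b l by auto
    consider "?p \<le> 0" | "?p \<ge> 1" | "0 < ?p \<and> ?p < 1" by linarith
    then show ?thesis
    proof cases
      case 1
      then have "w l > 1 - ?p" using wl bl mult_strict_right_mono[of 1 "b l" "1 - ?p"] by simp
      then show ?thesis using 1 by (simp add: dist_def)
    next
      case 2
      then have "- w l \<ge> ?p - 1" using wl bl mult_right_mono[of 1 "b l" "?p - 1"]
        by (simp add: algebra_simps)
      then show ?thesis using 2 by (simp add: dist_def)
    qed (simp add: dist_def)
  qed
  then have "\<forall>l<m. dist (w (cyc_pred m l)) = dist (w l)"
    by (intro cyc_pred_mono_imp_eq) blast
  with grow have pred_pos: "\<forall>l<m. w (cyc_pred m l) > 0"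
    by (metis not_le)
  then have pos: "\<forall>k<m. w k > 0" using cyc_pred_surj by metis
  have "\<forall>l<m. w (cyc_pred m l) < 1"
  proof (intro allI impI)
    fix l assume "l < m"
    then have "0 < b l * (1 - w (cyc_pred m l))" and "b l > 1" using pos w b by auto
    then show "w (cyc_pred m l) < 1" by (simp add: zero_less_mult_iff)
  qed
  then show ?thesis using pos cyc_pred_surj by metis
qed

lemma cyclic_recurrence_expanding_eq_0:
  fixes x b :: "nat \<Rightarrow> real"
  assumes b: "\<forall>l<m. \<bar>b l\<bar> > 1" and x: "\<forall>l<m. x l = b l * x (cyc_pred m l)"
  shows "\<forall>l<m. x l = 0"
proof -
  have grow: "\<bar>x (cyc_pred m l)\<bar> \<le> \<bar>x l\<bar> \<and>
      (x (cyc_pred m l) \<noteq> 0 \<longrightarrow> \<bar>x (cyc_pred m l)\<bar> < \<bar>x l\<bar>)" if "l < m" for l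
    using that b x mult_strict_right_mono[of 1 "\<bar>b l\<bar>" "\<bar>x (cyc_pred m l)\<bar>"]
      mult_right_mono[of 1 "\<bar>b l\<bar>" "\<bar>x (cyc_pred m l)\<bar>"]
    by (auto simp: abs_mult)
  then have "\<forall>l<m. \<bar>x (cyc_pred m l)\<bar> = \<bar>x l\<bar>"
    by (intro cyc_pred_mono_imp_eq) blast
  with grow have "\<forall>l<m. x (cyc_pred m l) = 0"
    by (metis less_irrefl)
  then show ?thesis using cyc_pred_surj by metis
qed

fun affine_orbit :: "(nat \<Rightarrow> real) \<Rightarrow> real \<Rightarrow> nat \<Rightarrow> real" where
  "affine_orbit b t 0 = t"
| "affine_orbit b t (Suc l) = b (Suc l) * (1 - affine_orbit b t l)"

lemma affine_orbit_affine:
  "affine_orbit b t l = affine_orbit b 0 l + t * (\<Prod>k\<in>{1..l}. - b k)"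
  by (induction l) (simp_all add: algebra_simps)

lemma cyclic_recurrence_solvable:
  fixes b :: "nat \<Rightarrow> real"
  assumes m: "0 < m" and b: "\<forall>l<m. b l > 1"
  shows "\<exists>w. \<forall>l<m. w l = b l * (1 - w (cyc_pred m l))"
proof -
  define a where "a = (\<Prod>k\<in>{1..m - 1}. - b k)"
  define g where "g = affine_orbit b 0 (m - 1)"
  have "\<bar>a\<bar> \<ge> 1"
    unfolding a_def abs_prod
  proof (intro prod_ge_1)
    fix k assume "k \<in> {1..m - 1}"
    then have "k < m" using m by auto
    then show "1 \<le> \<bar>- b k\<bar>" using b by fastforce
  qed
  moreover have b0: "b 0 > 1" using b m by simp
  ultimately have "b 0 \<le> b 0 * \<bar>a\<bar>" by (simp add: mult_le_cancel_left1)
  moreover have "\<bar>b 0 * a\<bar> = b 0 * \<bar>a\<bar>" using b0 by (simp add: abs_mult)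
  ultimately have "\<bar>b 0 * a\<bar> > 1" using b0 by linarith
  then have den: "1 + b 0 * a \<noteq> 0" by auto
  define t where "t = b 0 * (1 - g) / (1 + b 0 * a)"
  have "affine_orbit b t (m - 1) = g + t * a"
    unfolding g_def a_def by (rule affine_orbit_affine)
  then have t: "t = b 0 * (1 - affine_orbit b t (m - 1))"
    using den by (simp add: t_def field_simps)
  show ?thesis
  proof (intro exI allI impI)
    fix l assume "l < m"
    then show "affine_orbit b t l = b l * (1 - affine_orbit b t (cyc_pred m l))"
      using t by (cases l) (auto simp: cyc_pred_eq)
  qed
qed

lemma cyclic_recurrence_sum_gt_1:
  fixes w b :: "nat \<Rightarrow> real"
  assumes m: "2 \<le> m" and b: "\<forall>l<m. b l > 1" and w: "\<forall>l<m. w l = b l * (1 - w (cyc_pred m l))"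
  shows "(\<Sum>l<m. w l) > 1"
proof -
  have pos: "\<forall>l<m. 0 < w l \<and> w l < 1"
    using cyclic_recurrence_in_unit_interval[OF b w] .
  have "w 1 = b 1 * (1 - w 0)" using w[rule_format, of 1] m by (simp add: cyc_pred_eq)
  also have "\<dots> > 1 - w 0"
    using b pos m mult_strict_right_mono[of 1 "b 1" "1 - w 0"] by simp
  finally have "1 < (\<Sum>l\<in>{0, 1}. w l)" by simp
  also have "\<dots> \<le> (\<Sum>l<m. w l)"
    using pos m by (intro sum_mono2) (auto intro: less_imp_le)
  finally show ?thesis .
qed

lemma cyclic_balance_solvable:
  fixes b :: "nat \<Rightarrow> real"
  assumes m: "2 \<le> m" and e: "0 < e" "e < \<kappa>" and \<theta>: "0 < \<theta>" and b: "\<forall>l<m. 1 < b l"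
  shows "\<exists>X. \<forall>l<m. 0 < X l \<and> e * X l = b l * (\<kappa> * (\<Sum>k<m. X k) - \<theta> - e * X (cyc_pred m l))"
proof -
  obtain w where w: "\<forall>l<m. w l = b l * (1 - w (cyc_pred m l))"
    using cyclic_recurrence_solvable[OF _ b] m by force
  have w_pos: "\<forall>l<m. 0 < w l"
    using cyclic_recurrence_in_unit_interval[OF b w] by blast
  have "1 < (\<Sum>l<m. w l)"
    using cyclic_recurrence_sum_gt_1[OF m b w] .
  then have "\<kappa> < \<kappa> * (\<Sum>l<m. w l)"
    using e by (simp add: mult_less_cancel_left1)
  then have e_less: "e < \<kappa> * (\<Sum>l<m. w l)" using e by linarith
  define K where "K = \<kappa> * (\<Sum>l<m. w l) / e - 1"
  have K: "0 < K" using e e_less by (simp add: K_def field_simps)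
  define P where "P = \<theta> / K"
  have "0 < P" using K \<theta> by (simp add: P_def)
  have "\<kappa> * (\<Sum>k<m. P * w k / e) = P * (K + 1)"
    by (simp add: K_def sum_distrib_left[symmetric] sum_divide_distrib[symmetric])
  then have P: "\<kappa> * (\<Sum>k<m. P * w k / e) - \<theta> = P"
    using K by (simp add: P_def field_simps)
  show ?thesis
  proof (intro exI[of _ "\<lambda>l. P * w l / e"] allI impI conjI)
    fix l assume l: "l < m"
    show "0 < P * w l / e" using \<open>0 < P\<close> w_pos e l by simp
    have "e * (P * w l / e) = P * w l" using e by simp
    also have "\<dots> = P * (b l * (1 - w (cyc_pred m l)))" by (simp only: w[rule_format, OF l])
    also have "\<dots> = b l * (P - e * (P * w (cyc_pred m l) / e))" using e by (simp add: algebra_simps)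
    finally have "e * (P * w l / e) = b l * (P - e * (P * w (cyc_pred m l) / e))" .
    then show "e * (P * w l / e) = b l * (\<kappa> * (\<Sum>k<m. P * w k / e) - \<theta> - e * (P * w (cyc_pred m l) / e))"
      unfolding P .
  qed
qed

text \<open>Here \<open>s l\<close> is the total activity of a full-support fixed point of the \<open>l\<close>-th component and
  \<open>c l\<close> the factor by which it is rescaled inside the cyclic union,
  see \<open>has_full_support_fp_of_blocks\<close>.\<close>
lemma cyclic_scaling_solvable:
  fixes s :: "nat \<Rightarrow> real"
  assumes m: "2 \<le> m" and \<epsilon>: "0 < \<epsilon>" "\<epsilon> < 1" and \<delta>: "0 < \<delta>" and \<theta>: "0 < \<theta>"
    and s: "\<forall>l<m. \<theta> < (1 + \<delta>) * s l \<and> (1 - \<epsilon>) * s l < \<theta>"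
  shows "\<exists>c. \<forall>l<m. 0 < c l \<and> c l * ((1 + \<delta>) * s l - \<theta>)
    = (1 + \<delta>) * (\<Sum>k<m. c k * s k) - \<theta> - (\<delta> + \<epsilon>) * (c (cyc_pred m l) * s (cyc_pred m l))"
proof -
  define e where "e = \<delta> + \<epsilon>"
  define b where "b l = e * s l / ((1 + \<delta>) * s l - \<theta>)" for l
  have e: "0 < e" "e < 1 + \<delta>" using \<epsilon> \<delta> by (auto simp: e_def)
  have s_pos: "0 < s l" and D: "0 < (1 + \<delta>) * s l - \<theta>" "(1 + \<delta>) * s l - \<theta> < e * s l"
    if "l < m" for l
  proof -
    have "\<theta> < (1 + \<delta>) * s l" "(1 - \<epsilon>) * s l < \<theta>" using s that by blast+
    then show "0 < (1 + \<delta>) * s l - \<theta>" "(1 + \<delta>) * s l - \<theta> < e * s l"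
      by (auto simp: e_def algebra_simps)
    from \<open>\<theta> < (1 + \<delta>) * s l\<close> have "0 < (1 + \<delta>) * s l" using \<theta> by linarith
    then show "0 < s l" using \<delta> by (simp add: zero_less_mult_iff)
  qed
  have "\<forall>l<m. 1 < b l" using D by (simp add: b_def)
  then obtain X where X: "\<forall>l<m. 0 < X l \<and>
      e * X l = b l * ((1 + \<delta>) * (\<Sum>k<m. X k) - \<theta> - e * X (cyc_pred m l))"
    using cyclic_balance_solvable[OF m e \<theta>] by blast
  show ?thesis
  proof (intro exI[of _ "\<lambda>l. X l / s l"] allI impI conjI)
    fix l assume l: "l < m"
    let ?p = "cyc_pred m l"
    show "0 < X l / s l" using X s_pos l by simp
    have "1 < b l" using D l by (simp add: b_def)
    have "X l / s l * ((1 + \<delta>) * s l - \<theta>) = e * X l / b l"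
      using s_pos[OF l] D[OF l] e by (simp add: b_def field_simps)
    also have "\<dots> = (1 + \<delta>) * (\<Sum>k<m. X k) - \<theta> - e * X ?p"
      using X l \<open>1 < b l\<close> by simp
    also have "\<dots> = (1 + \<delta>) * (\<Sum>k<m. X k / s k * s k) - \<theta> - (\<delta> + \<epsilon>) * (X ?p / s ?p * s ?p)"
    proof -
      have Xs: "X k / s k * s k = X k" if "k < m" for k
        using s_pos[OF that] by simp
      then have "(\<Sum>k<m. X k / s k * s k) = (\<Sum>k<m. X k)" by simp
      moreover have "X ?p / s ?p * s ?p = X ?p" using Xs cyc_pred_less[of m l] m by simp
      ultimately show ?thesis by (simp add: e_def)
    qed
    finally show "X l / s l * ((1 + \<delta>) * s l - \<theta>)
        = (1 + \<delta>) * (\<Sum>k<m. X k / s k * s k) - \<theta> - (\<delta> + \<epsilon>) * (X ?p / s ?p * s ?p)" .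
  qed
qed

text \<open>Here \<open>Y l\<close> is the total activity of the \<open>l\<close>-th clique, of size \<open>n l\<close>, in a fixed point
  of a cyclic union of cliques and \<open>q l\<close> the common net input of its neurons,
  see \<open>cliques_fixed_point_pos\<close>.\<close>
lemma cyclic_threshold_all_active:
  fixes q Y n :: "nat \<Rightarrow> real"
  assumes "0 < \<epsilon>" "0 < \<delta>" "0 < \<theta>"
    and n: "\<forall>l<m. 1 \<le> n l" and Y0: "\<forall>l<m. 0 \<le> Y l"
    and q: "\<forall>l<m. q l = (\<delta> + \<epsilon>) * (Y l + Y (cyc_pred m l)) - (1 + \<delta>) * (\<Sum>k<m. Y k) + \<theta>"
    and active: "\<forall>l<m. 0 < q l \<longrightarrow> \<epsilon> * Y l = n l * q l"
    and inactive: "\<forall>l<m. q l \<le> 0 \<longrightarrow> Y l = 0"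
  shows "\<forall>l<m. 0 < q l"
proof (rule ccontr)
  assume "\<not> ?thesis"
  then obtain k where k: "k < m" "q k \<le> 0" by (auto simp: not_less)
  have "\<exists>l<m. q (cyc_pred m l) \<le> 0 \<and> 0 < q l"
  proof (rule ccontr)
    assume none: "\<not> ?thesis"
    have "\<forall>l<m. q l \<le> 0"
      by (rule cyc_pred_induct[of k m "\<lambda>l. q l \<le> 0", OF k]) (use none in \<open>auto simp: not_less\<close>)
    then have "\<forall>l<m. Y l = 0" using inactive by blast
    then have "q k = \<theta>" using q k(1) cyc_pred_less[of m k] by simp
    with k \<open>0 < \<theta>\<close> show False by simp
  qed
  then obtain l where l: "l < m" "q (cyc_pred m l) \<le> 0" "0 < q l" by blast
  define l' where "l' = Suc l mod m"
  have l': "l' < m" "cyc_pred m l' = l"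
    using l(1) cyc_pred_Suc_mod[of m l] by (auto simp: l'_def)
  have "Y (cyc_pred m l) = 0" using inactive l(1,2) cyc_pred_less[of m l] by simp
  then have q_l': "q l' = (\<delta> + \<epsilon>) * Y l' + q l"
    using q[rule_format, OF l(1)] q[rule_format, OF l'(1)] l'(2) by (simp add: algebra_simps)
  moreover have "0 \<le> (\<delta> + \<epsilon>) * Y l'" using Y0 l' assms(1,2) by simp
  ultimately have "0 < q l'" using l(3) by linarith
  then have "\<epsilon> * Y l' = n l' * q l'" using active l' by blast
  moreover have "\<epsilon> < (\<delta> + \<epsilon>) * n l'"
  proof -
    have "\<delta> + \<epsilon> \<le> (\<delta> + \<epsilon>) * n l'"
      using mult_left_mono[of 1 "n l'" "\<delta> + \<epsilon>"] n l' assms(1,2) by simp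
    then show ?thesis using assms(2) by linarith
  qed
  ultimately have "\<epsilon> * q l' < \<epsilon> * ((\<delta> + \<epsilon>) * Y l')"
    using \<open>0 < q l'\<close> mult_strict_right_mono[of \<epsilon> "(\<delta> + \<epsilon>) * n l'" "q l'"]
    by (simp add: algebra_simps)
  then have "q l' < (\<delta> + \<epsilon>) * Y l'" using assms(1) by simp
  with q_l' l(3) show False by linarith
qed

lemma cyclic_balance_homogeneous_eq_0:
  fixes X d :: "nat \<Rightarrow> real"
  assumes m: "2 \<le> m" and e: "0 < e" "e < \<kappa>" and d: "\<forall>l<m. 0 < d l \<and> d l < e"
    and X: "\<forall>l<m. d l * X l = \<kappa> * (\<Sum>k<m. X k) - e * X (cyc_pred m l)"
  shows "\<forall>l<m. X l = 0"
proof -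
  define T where "T = (\<Sum>k<m. X k)"
  define b where "b l = e / d l" for l
  have b: "\<forall>l<m. 1 < b l" using d by (simp add: b_def)
  have dX: "d l * X l = \<kappa> * T - e * X (cyc_pred m l)" if "l < m" for l
    using X that unfolding T_def by blast
  have "T = 0"
  proof (rule ccontr)
    assume T: "T \<noteq> 0"
    define w where "w l = e / (\<kappa> * T) * X l" for l
    have "\<forall>l<m. w l = b l * (1 - w (cyc_pred m l))"
    proof (intro allI impI)
      fix l assume l: "l < m"
      have K: "\<kappa> * T \<noteq> 0" using T e by simp
      have "w l * d l = e * (d l * X l) / (\<kappa> * T)" by (simp add: w_def algebra_simps)
      also have "\<dots> = e * (\<kappa> * T - e * X (cyc_pred m l)) / (\<kappa> * T)"
        by (simp only: dX[OF l])
      also have "\<dots> = e * (1 - w (cyc_pred m l))"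
        using K by (simp add: w_def field_simps)
      finally have "w l * d l = e * (1 - w (cyc_pred m l))" .
      moreover have "0 < d l" using d l by blast
      ultimately show "w l = b l * (1 - w (cyc_pred m l))"
        by (simp add: b_def field_simps)
    qed
    then have "1 < (\<Sum>l<m. w l)" using cyclic_recurrence_sum_gt_1[OF m b] by blast
    moreover have "(\<Sum>l<m. w l) = e / (\<kappa> * T) * T"
      unfolding w_def T_def by (rule sum_distrib_left[symmetric])
    moreover have "e / (\<kappa> * T) * T = e / \<kappa>" using T by simp
    moreover have "e / \<kappa> < 1" using e by simp
    ultimately show False by linarith
  qed
  have rec: "\<forall>l<m. X l = - b l * X (cyc_pred m l)"
  proof (intro allI impI)
    fix l assume l: "l < m"
    have "d l * X l = - e * X (cyc_pred m l)" using dX[OF l] \<open>T = 0\<close> by simp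
    moreover have "0 < d l" using d l by blast
    ultimately show "X l = - b l * X (cyc_pred m l)"
      by (simp add: b_def field_simps)
  qed
  have "\<forall>l<m. 1 < \<bar>- b l\<bar>" using b by fastforce
  from cyclic_recurrence_expanding_eq_0[OF this rec] show ?thesis .
qed

text \<open>Here \<open>X l\<close> are the block sums of a solution of \<open>(I - W) v = 0\<close> for a cyclic union of
  cliques, see \<open>cliques_homogeneous_eq_0\<close>.\<close>
lemma cyclic_homogeneous_eq_0:
  fixes X n :: "nat \<Rightarrow> real"
  assumes m: "2 \<le> m" and \<epsilon>: "0 < \<epsilon>" "\<epsilon> < 1" and \<delta>: "0 < \<delta>" and n: "\<forall>l<m. 1 \<le> n l"
    and X: "\<forall>l<m. \<epsilon> * X l = n l * ((\<delta> + \<epsilon>) * (X l + X (cyc_pred m l)) - (1 + \<delta>) * (\<Sum>k<m. X k))"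
  shows "\<forall>l<m. X l = 0"
proof (rule cyclic_balance_homogeneous_eq_0[OF m])
  let ?e = "\<delta> + \<epsilon>" and ?d = "\<lambda>l. \<delta> + \<epsilon> - \<epsilon> / n l"
  show "0 < ?e" "?e < 1 + \<delta>" using \<epsilon> \<delta> by auto
  show "\<forall>l<m. 0 < ?d l \<and> ?d l < ?e"
  proof (intro allI impI)
    fix l assume "l < m"
    then have "0 < \<epsilon> / n l" "\<epsilon> / n l \<le> \<epsilon>" using n \<epsilon> by (auto simp: divide_le_eq)
    then show "0 < ?d l \<and> ?d l < ?e" using \<delta> by auto
  qed
  show "\<forall>l<m. ?d l * X l = (1 + \<delta>) * (\<Sum>k<m. X k) - ?e * X (cyc_pred m l)"
  proof (intro allI impI)
    fix l assume l: "l < m"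
    have "n l \<noteq> 0" using n l by fastforce
    have "\<epsilon> / n l * X l = \<epsilon> * X l / n l" by simp
    also have "\<dots> = ?e * (X l + X (cyc_pred m l)) - (1 + \<delta>) * (\<Sum>k<m. X k)"
      using \<open>n l \<noteq> 0\<close> by (simp only: X[rule_format, OF l]) simp
    finally show "?d l * X l = (1 + \<delta>) * (\<Sum>k<m. X k) - ?e * X (cyc_pred m l)"
      by (simp add: algebra_simps)
  qed
qed

section \<open>Eigenvalues on finite index sets\<close>

lemma mat_mult_vec_bij_betw:
  assumes f: "bij_betw f {0..<n} S" and "i < n"
  shows "(mat n n (\<lambda>(i, j). complex_of_real (A (f i) (f j))) *\<^sub>v vec n (\<lambda>i. v (f i))) $ i
    = (\<Sum>s\<in>S. complex_of_real (A (f i) s) * v s)"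
  using assms sum.reindex_bij_betw[OF f, of "\<lambda>s. complex_of_real (A (f i) s) * v s"]
  by (simp add: scalar_prod_def)

lemma eigenvalue_if_is_eigenvalue_on:
  assumes f: "bij_betw f {0..<n} S" and "is_eigenvalue_on S A lam"
  shows "eigenvalue (mat n n (\<lambda>(i, j). complex_of_real (A (f i) (f j)))) lam"
proof -
  obtain v s where s: "s \<in> S" "v s \<noteq> 0"
    and v: "\<forall>i\<in>S. (\<Sum>j\<in>S. complex_of_real (A i j) * v j) = lam * v i"
    using assms(2) unfolding is_eigenvalue_on_def by blast
  let ?u = "vec n (\<lambda>i. v (f i))"
  obtain i where "i < n" "f i = s" using f s(1) by (auto simp: bij_betw_def)
  with s(2) have "?u \<noteq> 0\<^sub>v n" by (metis index_vec index_zero_vec(1))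
  moreover have "mat n n (\<lambda>(i, j). complex_of_real (A (f i) (f j))) *\<^sub>v ?u = lam \<cdot>\<^sub>v ?u"
    using mat_mult_vec_bij_betw[OF f] v f by (intro eq_vecI) (auto simp: bij_betw_def)
  ultimately show ?thesis
    unfolding eigenvalue_def eigenvector_def by (intro exI[of _ ?u]) auto
qed

lemma is_eigenvalue_on_if_eigenvalue:
  assumes f: "bij_betw f {0..<n} S"
    and "eigenvalue (mat n n (\<lambda>(i, j). complex_of_real (A (f i) (f j)))) lam" (is "eigenvalue ?M lam")
  shows "is_eigenvalue_on S A lam"
proof -
  obtain u where u: "u \<in> carrier_vec n" "u \<noteq> 0\<^sub>v n" "?M *\<^sub>v u = lam \<cdot>\<^sub>v u"
    using assms(2) unfolding eigenvalue_def eigenvector_def by auto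
  define v where "v s = u $ inv_into {0..<n} f s" for s
  have vf: "v (f i) = u $ i" if "i < n" for i
    using f that by (simp add: v_def bij_betw_def)
  then have u_eq: "u = vec n (\<lambda>i. v (f i))"
    using u(1) by (intro eq_vecI) auto
  obtain i where "i < n" "u $ i \<noteq> 0"
    using u(1,2) by (metis carrier_vecD eq_vecI index_zero_vec)
  then have "\<exists>s\<in>S. v s \<noteq> 0" using vf f by (metis bij_betwE atLeastLessThan_iff zero_le)
  moreover have "\<forall>s\<in>S. (\<Sum>j\<in>S. complex_of_real (A s j) * v j) = lam * v s"
  proof
    fix s assume "s \<in> S"
    then obtain k where k: "k < n" "f k = s" using f by (auto simp: bij_betw_def)
    have "(\<Sum>j\<in>S. complex_of_real (A s j) * v j) = (?M *\<^sub>v u) $ k"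
      using mat_mult_vec_bij_betw[OF f k(1), of A v] k(2) u_eq by simp
    also have "\<dots> = lam * u $ k" using u(1,3) k(1) by simp
    also have "u $ k = v s" using vf[OF k(1)] k(2) by simp
    finally show "(\<Sum>j\<in>S. complex_of_real (A s j) * v j) = lam * v s" .
  qed
  ultimately show ?thesis unfolding is_eigenvalue_on_def by blast
qed

lemma is_eigenvalue_on_iff_eigenvalue:
  assumes "bij_betw f {0..<n} S"
  shows "is_eigenvalue_on S A lam \<longleftrightarrow>
    eigenvalue (mat n n (\<lambda>(i, j). complex_of_real (A (f i) (f j)))) lam"
  using eigenvalue_if_is_eigenvalue_on is_eigenvalue_on_if_eigenvalue assms by blast

lemma is_eigenvalue_on_transpose:
  assumes "finite S"
  shows "is_eigenvalue_on S (\<lambda>i j. A j i) lam \<longleftrightarrow> is_eigenvalue_on S A lam"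
proof -
  obtain f where f: "bij_betw f {0..<card S} S"
    using ex_bij_betw_nat_finite[OF assms] by blast
  define M where "M = mat (card S) (card S) (\<lambda>(i, j). complex_of_real (A (f i) (f j)))"
  have M: "M \<in> carrier_mat (card S) (card S)" and MT: "transpose_mat M \<in> carrier_mat (card S) (card S)"
    by (simp_all add: M_def)
  have "mat (card S) (card S) (\<lambda>(i, j). complex_of_real (A (f j) (f i))) = transpose_mat M"
    by (rule eq_matI) (auto simp: M_def)
  then show ?thesis
    unfolding is_eigenvalue_on_iff_eigenvalue[OF f] M_def[symmetric]
    by (simp add: eigenvalue_root_char_poly[OF M] eigenvalue_root_char_poly[OF MT] char_poly_transpose_mat[OF M])
qed

definition mat_trace :: "'a::comm_ring_1 mat \<Rightarrow> 'a" where
  "mat_trace A = (\<Sum>i<dim_row A. A $$ (i, i))"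

lemma mat_trace_mult_comm:
  assumes "A \<in> carrier_mat n k" "B \<in> carrier_mat k n"
  shows "mat_trace (A * B) = mat_trace (B * A)"
proof -
  have "mat_trace (A * B) = (\<Sum>i<n. \<Sum>j<k. A $$ (i, j) * B $$ (j, i))"
    using assms by (simp add: mat_trace_def scalar_prod_def lessThan_atLeast0)
  also have "\<dots> = (\<Sum>j<k. \<Sum>i<n. B $$ (j, i) * A $$ (i, j))"
    by (subst sum.swap) (simp add: mult.commute)
  also have "\<dots> = mat_trace (B * A)"
    using assms by (simp add: mat_trace_def scalar_prod_def lessThan_atLeast0)
  finally show ?thesis .
qed

lemma mat_trace_similar:
  assumes "similar_mat_wit A B P Q"
  shows "mat_trace A = mat_trace B"
proof -
  obtain n where carr: "A \<in> carrier_mat n n" "B \<in> carrier_mat n n" "P \<in> carrier_mat n n"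
    "Q \<in> carrier_mat n n" and QP: "Q * P = 1\<^sub>m n" and A: "A = P * B * Q"
    using assms unfolding similar_mat_wit_def Let_def by auto
  have "mat_trace A = mat_trace (Q * (P * B))"
    unfolding A using carr by (intro mat_trace_mult_comm) auto
  also have "Q * (P * B) = B"
    using carr QP by (simp flip: assoc_mult_mat[of Q n n P n B n])
  finally show ?thesis .
qed

lemma mat_trace_square_upper_triangular:
  assumes B: "B \<in> carrier_mat n n" and ut: "upper_triangular B"
  shows "mat_trace (B * B) = (\<Sum>i<n. (B $$ (i, i))\<^sup>2)"
proof -
  have "(B * B) $$ (i, i) = (B $$ (i, i))\<^sup>2" if i: "i < n" for i
  proof -
    have "(B * B) $$ (i, i) = (\<Sum>k\<in>{0..<n}. B $$ (i, k) * B $$ (k, i))"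
      using i B by (simp add: scalar_prod_def)
    also have "\<dots> = (\<Sum>k\<in>{0..<n}. if k = i then (B $$ (i, i))\<^sup>2 else 0)"
      using ut B i by (intro sum.cong) (auto simp: upper_triangular_def power2_eq_square
          dest: linorder_neqE_nat)
    finally show ?thesis using i by simp
  qed
  then show ?thesis using B by (simp add: mat_trace_def)
qed

lemma square_sum_ge_sum_squares:
  fixes a :: "'b \<Rightarrow> real"
  assumes "\<forall>i\<in>I. 0 \<le> a i"
  shows "(\<Sum>i\<in>I. (a i)\<^sup>2) \<le> (\<Sum>i\<in>I. a i)\<^sup>2"
proof (cases "finite I")
  case True
  have "(\<Sum>i\<in>I. a i * a i) \<le> (\<Sum>i\<in>I. \<Sum>j\<in>I. a i * a j)"
    using True assms by (intro sum_mono member_le_sum) auto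
  then show ?thesis by (simp add: power2_eq_square sum_product)
qed simp

text \<open>If every eigenvalue \<open>\<mu>\<close> had positive real part, then
  \<open>Re (tr (A\<^sup>2)) = \<Sum> Re (\<mu>\<^sup>2) \<le> \<Sum> (Re \<mu>)\<^sup>2 \<le> (\<Sum> Re \<mu>)\<^sup>2 = (Re (tr A))\<^sup>2\<close>.\<close>
lemma eigenvalue_Re_nonpos_if_trace_square:
  fixes A :: "complex mat"
  assumes A: "A \<in> carrier_mat n n" and tr: "(Re (mat_trace A))\<^sup>2 < Re (mat_trace (A * A))"
  shows "\<exists>\<mu>. eigenvalue A \<mu> \<and> Re \<mu> \<le> 0"
proof (rule ccontr)
  assume no: "\<not> ?thesis"
  obtain es where es: "char_poly A = (\<Prod>a\<leftarrow>es. [:- a, 1:])"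
    using char_poly_factorized[OF A] by blast
  obtain B P Q where BPQ: "schur_decomposition A es = (B, P, Q)"
    by (cases "schur_decomposition A es") auto
  from schur_decomposition[OF A es BPQ]
  have sim: "similar_mat_wit A B P Q" and ut: "upper_triangular B" and diag: "diag_mat B = es"
    by auto
  have B: "B \<in> carrier_mat n n" using similar_mat_witD2[OF A sim] by auto
  define a where "a i = Re (B $$ (i, i))" for i
  have ev: "eigenvalue A (B $$ (i, i))" if "i < n" for i
  proof -
    have "B $$ (i, i) \<in> set es" using diag B that by (auto simp: diag_mat_def)
    then have "poly (char_poly A) (B $$ (i, i)) = 0"
      unfolding es poly_prod_list by (induction es) auto
    then show ?thesis using eigenvalue_root_char_poly[OF A] by simp
  qed
  have pos: "\<forall>i\<in>{..<n}. 0 \<le> a i"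
    unfolding a_def using no ev by (meson lessThan_iff not_le less_imp_le)
  have tr_eq: "Re (mat_trace A) = (\<Sum>i<n. a i)"
    using mat_trace_similar[OF sim] B by (simp add: mat_trace_def a_def)
  have "Re (mat_trace (A * A)) \<le> (\<Sum>i<n. (a i)\<^sup>2)"
  proof -
    have "similar_mat_wit (A ^\<^sub>m 2) (B ^\<^sub>m 2) P Q" by (rule similar_mat_wit_pow[OF sim])
    moreover have "A ^\<^sub>m 2 = A * A" "B ^\<^sub>m 2 = B * B"
      using A B by (simp_all add: numeral_2_eq_2)
    ultimately have "mat_trace (A * A) = (\<Sum>i<n. (B $$ (i, i))\<^sup>2)"
      using mat_trace_similar mat_trace_square_upper_triangular[OF B ut] by metis
    then show ?thesis
      by (simp add: a_def power2_eq_square sum_mono)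
  qed
  then show False
    using tr square_sum_ge_sum_squares[OF pos] unfolding tr_eq by linarith
qed

section \<open>Fixed points of threshold-linear networks\<close>

lemma legal_paramsD:
  assumes "legal_params \<epsilon> \<delta>"
  shows "0 < \<delta>" "0 < \<epsilon>" "\<epsilon> < 1" "1 < (1 - \<epsilon>) * (1 + \<delta>)"
proof -
  show \<delta>: "0 < \<delta>" and "0 < \<epsilon>" using assms by (auto simp: legal_params_def)
  have *: "\<epsilon> * (1 + \<delta>) < \<delta>"
    using assms \<delta> by (simp add: legal_params_def field_simps)
  then have "\<epsilon> * (1 + \<delta>) < 1 + \<delta>" by linarith
  then show "\<epsilon> < 1" using \<delta> by (simp add: mult_less_cancel_right2)
  show "1 < (1 - \<epsilon>) * (1 + \<delta>)" using * by (simp add: algebra_simps)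
qed

lemma ctln_diag [simp]: "ctln E \<epsilon> \<delta> i i = 0"
  by (simp add: ctln_def)

lemma ctln_fixed_point_nonneg: "ctln_fixed_point V E \<epsilon> \<delta> \<theta> x \<Longrightarrow> 0 \<le> x i"
  unfolding ctln_fixed_point_def by (metis order_refl)

lemma ctln_fixed_point_outside: "ctln_fixed_point V E \<epsilon> \<delta> \<theta> x \<Longrightarrow> i \<notin> V \<Longrightarrow> x i = 0"
  unfolding ctln_fixed_point_def by blast

lemma ctln_fixed_point_eq:
  "ctln_fixed_point V E \<epsilon> \<delta> \<theta> x \<Longrightarrow> i \<in> V \<Longrightarrow>
    x i = max 0 ((\<Sum>j\<in>V. ctln E \<epsilon> \<delta> i j * x j) + \<theta>)"
  unfolding ctln_fixed_point_def by blast

lemma full_support_fixed_point_iff: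
  "ctln_fixed_point V E \<epsilon> \<delta> \<theta> x \<and> supp V x = V \<longleftrightarrow>
    (\<forall>i. i \<notin> V \<longrightarrow> x i = 0) \<and>
    (\<forall>i\<in>V. 0 < x i \<and> x i = (\<Sum>j\<in>V. ctln E \<epsilon> \<delta> i j * x j) + \<theta>)"
proof -
  define a where "a i = (\<Sum>j\<in>V. ctln E \<epsilon> \<delta> i j * x j) + \<theta>" for i
  have "supp V x = V \<longleftrightarrow> (\<forall>i\<in>V. 0 < x i)"
    by (auto simp: supp_def)
  moreover have "0 \<le> u \<and> u = max 0 b \<longleftrightarrow> u = b" if "0 < u" for u b :: real
    using that by (auto simp: max_def)
  ultimately have "((\<forall>i. i \<notin> V \<longrightarrow> x i = 0) \<and> (\<forall>i\<in>V. 0 \<le> x i \<and> x i = max 0 (a i))) \<and>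
      supp V x = V \<longleftrightarrow> (\<forall>i. i \<notin> V \<longrightarrow> x i = 0) \<and> (\<forall>i\<in>V. 0 < x i \<and> x i = a i)"
    by auto
  then show ?thesis unfolding ctln_fixed_point_def a_def .
qed

lemma ctln_row_sum_bounds:
  assumes S: "finite S" "i \<in> S" and x: "\<forall>j. 0 \<le> x j" and "0 < \<epsilon>" "0 < \<delta>"
  shows "- (1 + \<delta>) * ((\<Sum>j\<in>S. x j) - x i) \<le> (\<Sum>j\<in>S. ctln E \<epsilon> \<delta> i j * x j)"
    and "(\<Sum>j\<in>S. ctln E \<epsilon> \<delta> i j * x j) \<le> - (1 - \<epsilon>) * ((\<Sum>j\<in>S. x j) - x i)"
proof -
  have row: "(\<Sum>j\<in>S. ctln E \<epsilon> \<delta> i j * x j) = (\<Sum>j\<in>S - {i}. ctln E \<epsilon> \<delta> i j * x j)"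
    using S by (simp add: sum_diff1)
  have rest: "(\<Sum>j\<in>S - {i}. c * x j) = c * ((\<Sum>j\<in>S. x j) - x i)" for c
    using S by (simp add: sum_distrib_left[symmetric] sum_diff1)
  have "(\<Sum>j\<in>S - {i}. - (1 + \<delta>) * x j) \<le> (\<Sum>j\<in>S - {i}. ctln E \<epsilon> \<delta> i j * x j)"
    using x assms by (intro sum_mono mult_right_mono) (auto simp: ctln_def)
  then show "- (1 + \<delta>) * ((\<Sum>j\<in>S. x j) - x i) \<le> (\<Sum>j\<in>S. ctln E \<epsilon> \<delta> i j * x j)"
    by (simp only: row rest)
  have "(\<Sum>j\<in>S - {i}. ctln E \<epsilon> \<delta> i j * x j) \<le> (\<Sum>j\<in>S - {i}. - (1 - \<epsilon>) * x j)"
    using x assms by (intro sum_mono mult_right_mono) (auto simp: ctln_def)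
  then show "(\<Sum>j\<in>S. ctln E \<epsilon> \<delta> i j * x j) \<le> - (1 - \<epsilon>) * ((\<Sum>j\<in>S. x j) - x i)"
    by (simp only: row rest)
qed

lemma full_support_fixed_point_sum_bounds:
  assumes S: "finite S" "S \<noteq> {}" and "0 < \<epsilon>" "0 < \<delta>"
    and fp: "ctln_fixed_point S E \<epsilon> \<delta> \<theta> y" "supp S y = S"
  shows "\<theta> < (1 + \<delta>) * (\<Sum>j\<in>S. y j)" and "(1 - \<epsilon>) * (\<Sum>j\<in>S. y j) < \<theta>"
proof -
  obtain i where i: "i \<in> S" using S by blast
  have y: "\<forall>j. 0 \<le> y j" using ctln_fixed_point_nonneg[OF fp(1)] by blast
  have "\<forall>i\<in>S. 0 < y i \<and> y i = (\<Sum>j\<in>S. ctln E \<epsilon> \<delta> i j * y j) + \<theta>"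
    using full_support_fixed_point_iff[THEN iffD1, OF conjI[OF fp]] by (rule conjunct2)
  then have yi: "0 < y i" "y i = (\<Sum>j\<in>S. ctln E \<epsilon> \<delta> i j * y j) + \<theta>"
    using i by blast+
  have row: "(\<Sum>j\<in>S. ctln E \<epsilon> \<delta> i j * y j) = y i - \<theta>"
    using yi(2) by linarith
  have "0 < \<delta> * y i" "0 < \<epsilon> * y i" using yi(1) assms(3,4) by simp_all
  then show "\<theta> < (1 + \<delta>) * (\<Sum>j\<in>S. y j)" and "(1 - \<epsilon>) * (\<Sum>j\<in>S. y j) < \<theta>"
    using ctln_row_sum_bounds[OF S(1) i y assms(3,4), where E = E] unfolding row
    by (simp_all add: algebra_simps)
qed

text \<open>The fixed point equations are homogeneous in \<open>(x, h)\<close>.\<close>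
lemma has_full_support_fp_rescale:
  assumes "0 < \<theta>" "0 < h"
    and x: "\<forall>i\<in>S. 0 < x i \<and> x i = (\<Sum>j\<in>S. ctln E \<epsilon> \<delta> i j * x j) + h"
  shows "has_full_support_fp S E \<epsilon> \<delta> \<theta>"
proof -
  define y where "y i = (if i \<in> S then \<theta> / h * x i else 0)" for i
  have eq: "y i = (\<Sum>j\<in>S. ctln E \<epsilon> \<delta> i j * y j) + \<theta>" if "i \<in> S" for i
  proof -
    have "(\<Sum>j\<in>S. ctln E \<epsilon> \<delta> i j * y j) = (\<Sum>j\<in>S. \<theta> / h * (ctln E \<epsilon> \<delta> i j * x j))"
      by (intro sum.cong) (simp_all add: y_def)
    also have "\<dots> = \<theta> / h * (\<Sum>j\<in>S. ctln E \<epsilon> \<delta> i j * x j)"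
      by (simp add: sum_distrib_left)
    also have "(\<Sum>j\<in>S. ctln E \<epsilon> \<delta> i j * x j) = x i - h"
      using x that by (metis add_diff_cancel_right')
    finally have "(\<Sum>j\<in>S. ctln E \<epsilon> \<delta> i j * y j) + \<theta> = \<theta> / h * x i"
      using \<open>0 < h\<close> by (simp add: field_simps)
    then show ?thesis using that unfolding y_def[of i] by simp
  qed
  moreover have pos: "0 < y i" if "i \<in> S" for i
  proof -
    have "0 < x i" using x that by blast
    then show ?thesis using that assms(1,2) by (simp add: y_def)
  qed
  moreover have zero: "y i = 0" if "i \<notin> S" for i
    using that by (simp add: y_def)
  ultimately have "ctln_fixed_point S E \<epsilon> \<delta> \<theta> y \<and> supp S y = S"
    unfolding full_support_fixed_point_iff
    by (intro conjI allI impI ballI) (erule zero, erule pos, erule eq)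
  then show ?thesis unfolding has_full_support_fp_def by blast
qed

lemma clique_row_sum:
  assumes "is_clique S E" "finite S" "i \<in> S"
  shows "(\<Sum>j\<in>S. ctln E \<epsilon> \<delta> i j * x j) = - (1 - \<epsilon>) * ((\<Sum>j\<in>S. x j) - x i)"
proof -
  have "(\<Sum>j\<in>S. ctln E \<epsilon> \<delta> i j * x j) = (\<Sum>j\<in>S - {i}. ctln E \<epsilon> \<delta> i j * x j)"
    using assms by (simp add: sum.remove)
  also have "\<dots> = (\<Sum>j\<in>S - {i}. - (1 - \<epsilon>) * x j)"
    using assms by (intro sum.cong) (auto simp: is_clique_def ctln_def)
  also have "\<dots> = - (1 - \<epsilon>) * ((\<Sum>j\<in>S. x j) - x i)"
    using assms by (simp add: sum_distrib_left[symmetric] sum_diff1)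
  finally show ?thesis .
qed

lemma clique_has_full_support_fp:
  assumes "is_clique S E" "finite S" and "0 < \<theta>" "0 < \<epsilon>" "\<epsilon> < 1"
  shows "has_full_support_fp S E \<epsilon> \<delta> \<theta>"
proof (rule has_full_support_fp_rescale[where x = "\<lambda>_. 1"])
  let ?h = "1 + (1 - \<epsilon>) * (real (card S) - 1)"
  show "\<forall>i\<in>S. 0 < (1::real) \<and> 1 = (\<Sum>j\<in>S. ctln E \<epsilon> \<delta> i j * 1) + ?h"
    using assms clique_row_sum[OF assms(1,2), of _ \<epsilon> \<delta> "\<lambda>_. 1"] by (simp add: algebra_simps)
  have "1 \<le> real (card S)" if "S \<noteq> {}"
    using assms that by (simp add: Suc_le_eq card_gt_0_iff)
  then show "0 < ?h" using assms by (cases "S = {}") (auto intro: add_pos_nonneg)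
qed (use assms in simp)

lemma IminusW_nonneg: "\<epsilon> < 1 \<Longrightarrow> 0 < \<delta> \<Longrightarrow> 0 \<le> IminusW E \<epsilon> \<delta> i k"
  by (simp add: IminusW_def ctln_def)

lemma IminusW_row_sum:
  assumes "finite S" "i \<in> S" "\<not> E i i"
  shows "(\<Sum>k\<in>S. IminusW E \<epsilon> \<delta> i k)
    = (1 + \<delta>) * real (card S) - (\<delta> + \<epsilon>) * real (card {k\<in>S. E k i}) - \<delta>"
proof -
  have "(\<Sum>k\<in>S. IminusW E \<epsilon> \<delta> i k)
      = (\<Sum>k\<in>S. (1 + \<delta>) - (if E k i then \<delta> + \<epsilon> else 0) - (if k = i then \<delta> else 0))"
    using assms by (intro sum.cong) (auto simp: IminusW_def ctln_def)
  also have "\<dots> = (1 + \<delta>) * real (card S) - (\<delta> + \<epsilon>) * real (card {k\<in>S. E k i}) - \<delta>"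
    using assms by (simp add: sum_subtractf sum.If_cases Int_def)
  finally show ?thesis .
qed

lemma left_eigenvector_sum_eq_0:
  fixes A :: "'a \<Rightarrow> 'a \<Rightarrow> real" and u :: "'a \<Rightarrow> complex"
  assumes rows: "\<forall>i\<in>S. (\<Sum>k\<in>S. A i k) = r"
    and u: "\<forall>k\<in>S. (\<Sum>i\<in>S. complex_of_real (A i k) * u i) = lam * u k"
    and "lam \<noteq> complex_of_real r"
  shows "(\<Sum>i\<in>S. u i) = 0"
proof -
  have "lam * (\<Sum>i\<in>S. u i) = (\<Sum>k\<in>S. \<Sum>i\<in>S. complex_of_real (A i k) * u i)"
    using u by (simp add: sum_distrib_left)
  also have "\<dots> = (\<Sum>i\<in>S. complex_of_real (\<Sum>k\<in>S. A i k) * u i)"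
    by (subst sum.swap) (simp add: sum_distrib_right)
  also have "\<dots> = complex_of_real r * (\<Sum>i\<in>S. u i)"
    using rows by (simp add: sum_distrib_left)
  finally show ?thesis using assms(3) by simp
qed

lemma not_stable_fp_if_eigenvalue:
  assumes "is_eigenvalue_on V (IminusW E \<epsilon> \<delta>) lam" "Re lam \<le> 0" "supp V x = V"
  shows "\<not> stable_fp V E \<epsilon> \<delta> x"
  using assms unfolding stable_fp_def by force

section \<open>Cyclic unions\<close>

locale cyclic_union_ctln =
  fixes V :: "'a set" and E :: "'a \<Rightarrow> 'a \<Rightarrow> bool" and m :: nat and C :: "nat \<Rightarrow> 'a set"
    and \<epsilon> \<delta> \<theta> :: real
  assumes graph: "simple_digraph V E" and m3: "3 \<le> m" and cu: "cyclic_union V E m C"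
    and legal: "legal_params \<epsilon> \<delta>" and \<theta>: "0 < \<theta>"
begin

lemmas \<delta>_pos = legal_paramsD(1)[OF legal]
  and \<epsilon>_pos = legal_paramsD(2)[OF legal]
  and \<epsilon>_less_1 = legal_paramsD(3)[OF legal]
  and params_product_gt_1 = legal_paramsD(4)[OF legal]

lemma finite_V: "finite V"
  using graph by (simp add: simple_digraph_def)

lemma no_loop: "i \<in> V \<Longrightarrow> \<not> E i i"
  using graph by (simp add: simple_digraph_def)

lemma V_eq_Union: "V = (\<Union>k<m. C k)"
  using cu by (simp add: cyclic_union_def)

lemma C_subset: "k < m \<Longrightarrow> C k \<subseteq> V"
  using V_eq_Union by blast

lemma finite_C: "k < m \<Longrightarrow> finite (C k)"
  using C_subset finite_V finite_subset by blast

lemma C_nonempty: "k < m \<Longrightarrow> C k \<noteq> {}"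
  using cu by (simp add: cyclic_union_def)

lemma card_C_ge_1: "k < m \<Longrightarrow> 1 \<le> real (card (C k))"
  using C_nonempty finite_C by (simp add: Suc_le_eq card_gt_0_iff)

lemma C_disjoint: "k < m \<Longrightarrow> l < m \<Longrightarrow> k \<noteq> l \<Longrightarrow> C k \<inter> C l = {}"
  using cu by (simp add: cyclic_union_def)

lemma component_exists: "i \<in> V \<Longrightarrow> \<exists>l<m. i \<in> C l"
  using V_eq_Union by blast

lemma component_unique: "k < m \<Longrightarrow> l < m \<Longrightarrow> i \<in> C k \<Longrightarrow> i \<in> C l \<Longrightarrow> k = l"
  using C_disjoint by blast

definition component :: "'a \<Rightarrow> nat" where
  "component i = (THE l. l < m \<and> i \<in> C l)"

lemma component_eq: "l < m \<Longrightarrow> i \<in> C l \<Longrightarrow> component i = l"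
  unfolding component_def by (rule the_equality) (auto dest: component_unique)

lemma edge_between:
  assumes "k < m" "l < m" "k \<noteq> l" "j \<in> C k" "i \<in> C l"
  shows "E j i \<longleftrightarrow> k = cyc_pred m l"
proof -
  have "E j i \<longleftrightarrow> l = Suc k mod m"
    using cu assms by (simp add: cyclic_union_def)
  also have "\<dots> \<longleftrightarrow> k = cyc_pred m l"
    using assms cyc_pred_Suc_mod[of m k] Suc_cyc_pred_mod[of l m] by auto
  finally show ?thesis .
qed

lemma ctln_between:
  assumes "k < m" "l < m" "k \<noteq> l" "i \<in> C l" "j \<in> C k"
  shows "ctln E \<epsilon> \<delta> i j = (if k = cyc_pred m l then -1 + \<epsilon> else -1 - \<delta>)"
proof -
  have "i \<noteq> j" using assms C_disjoint by blast
  then show ?thesis using edge_between[OF assms(1-3,5,4)] by (simp add: ctln_def)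
qed

definition block_sum :: "('a \<Rightarrow> real) \<Rightarrow> nat \<Rightarrow> real" where
  "block_sum x k = (\<Sum>j\<in>C k. x j)"

lemma sum_V_blocks: "(\<Sum>j\<in>V. g j) = (\<Sum>k<m. \<Sum>j\<in>C k. g j)"
  unfolding V_eq_Union by (rule sum.UNION_disjoint) (auto simp: finite_C dest: C_disjoint)

lemma ctln_row_sum:
  assumes l: "l < m" and i: "i \<in> C l"
  shows "(\<Sum>j\<in>V. ctln E \<epsilon> \<delta> i j * x j) = (\<Sum>j\<in>C l. ctln E \<epsilon> \<delta> i j * x j)
    - (1 + \<delta>) * ((\<Sum>k<m. block_sum x k) - block_sum x l) + (\<delta> + \<epsilon>) * block_sum x (cyc_pred m l)"
proof -
  let ?p = "cyc_pred m l"
  have p: "?p \<in> {..<m} - {l}" using l m3 cyc_pred_less[of m l] cyc_pred_neq[of m l] by auto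
  have other: "(\<Sum>j\<in>C k. ctln E \<epsilon> \<delta> i j * x j)
      = - (1 + \<delta>) * block_sum x k + (if k = ?p then (\<delta> + \<epsilon>) * block_sum x k else 0)"
    if "k \<in> {..<m} - {l}" for k
  proof -
    have "(\<Sum>j\<in>C k. ctln E \<epsilon> \<delta> i j * x j) = (if k = ?p then -1 + \<epsilon> else -1 - \<delta>) * block_sum x k"
      using that l i ctln_between[of k l i] by (simp add: block_sum_def sum_distrib_left)
    then show ?thesis by (simp add: algebra_simps)
  qed
  have "(\<Sum>j\<in>V. ctln E \<epsilon> \<delta> i j * x j)
      = (\<Sum>j\<in>C l. ctln E \<epsilon> \<delta> i j * x j) + (\<Sum>k\<in>{..<m} - {l}. \<Sum>j\<in>C k. ctln E \<epsilon> \<delta> i j * x j)"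
    unfolding sum_V_blocks using l by (intro sum.remove) auto
  also have "(\<Sum>k\<in>{..<m} - {l}. \<Sum>j\<in>C k. ctln E \<epsilon> \<delta> i j * x j)
      = - (1 + \<delta>) * (\<Sum>k\<in>{..<m} - {l}. block_sum x k) + (\<delta> + \<epsilon>) * block_sum x ?p"
    using p by (simp add: other sum.distrib sum_distrib_left)
  also have "(\<Sum>k\<in>{..<m} - {l}. block_sum x k) = (\<Sum>k<m. block_sum x k) - block_sum x l"
    using l by (simp add: sum_diff1)
  finally show ?thesis by (simp add: algebra_simps)
qed

lemma has_full_support_fp_component:
  assumes "has_full_support_fp V E \<epsilon> \<delta> \<theta>" and l: "l < m"
  shows "has_full_support_fp (C l) E \<epsilon> \<delta> \<theta>"
proof -
  obtain x where fp: "ctln_fixed_point V E \<epsilon> \<delta> \<theta> x \<and> supp V x = V"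
    using assms(1) unfolding has_full_support_fp_def by blast
  have x0: "\<forall>j. 0 \<le> x j" using ctln_fixed_point_nonneg[OF conjunct1[OF fp]] by blast
  from fp have x: "\<forall>i\<in>V. 0 < x i \<and> x i = (\<Sum>j\<in>V. ctln E \<epsilon> \<delta> i j * x j) + \<theta>"
    unfolding full_support_fixed_point_iff by (rule conjunct2)
  define h where "h = \<theta> - (1 + \<delta>) * ((\<Sum>k<m. block_sum x k) - block_sum x l)
    + (\<delta> + \<epsilon>) * block_sum x (cyc_pred m l)"
  have eq: "\<forall>i\<in>C l. 0 < x i \<and> x i = (\<Sum>j\<in>C l. ctln E \<epsilon> \<delta> i j * x j) + h"
  proof
    fix i assume i: "i \<in> C l"
    then have "i \<in> V" using C_subset[OF l] by blast
    then have "0 < x i \<and> x i = (\<Sum>j\<in>V. ctln E \<epsilon> \<delta> i j * x j) + \<theta>"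
      using x by (rule bspec[rotated])
    then show "0 < x i \<and> x i = (\<Sum>j\<in>C l. ctln E \<epsilon> \<delta> i j * x j) + h"
      using ctln_row_sum[OF l i, of x] unfolding h_def by (elim conjE) (intro conjI; linarith)
  qed
  obtain i where i: "i \<in> C l" using C_nonempty[OF l] by blast
  have "x i \<le> (\<Sum>j\<in>C l. x j)"
    using finite_C[OF l] i x0 by (intro member_le_sum) auto
  then have "0 \<le> (1 - \<epsilon>) * ((\<Sum>j\<in>C l. x j) - x i)"
    using \<epsilon>_less_1 by simp
  then have "(\<Sum>j\<in>C l. ctln E \<epsilon> \<delta> i j * x j) \<le> 0"
    using ctln_row_sum_bounds(2)[OF finite_C[OF l] i x0 \<epsilon>_pos \<delta>_pos, where E = E] by linarith
  moreover have "0 < x i \<and> x i = (\<Sum>j\<in>C l. ctln E \<epsilon> \<delta> i j * x j) + h"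
    using bspec[OF eq i] .
  ultimately have "0 < h" by linarith
  then show ?thesis using has_full_support_fp_rescale[OF \<theta> _ eq] by blast
qed

lemma has_full_support_fp_of_blocks:
  assumes Y: "\<forall>l<m. \<forall>i\<in>C l. 0 < Y l i \<and> Y l i = (\<Sum>j\<in>C l. ctln E \<epsilon> \<delta> i j * Y l j) + \<theta>"
    and s: "\<forall>l<m. s l = (\<Sum>j\<in>C l. Y l j)"
    and c: "\<forall>l<m. 0 < c l \<and> c l * ((1 + \<delta>) * s l - \<theta>)
      = (1 + \<delta>) * (\<Sum>k<m. c k * s k) - \<theta> - (\<delta> + \<epsilon>) * (c (cyc_pred m l) * s (cyc_pred m l))"
  shows "has_full_support_fp V E \<epsilon> \<delta> \<theta>"
proof -
  define x where "x i = (if i \<in> V then c (component i) * Y (component i) i else 0)" for i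
  have x_C: "x i = c l * Y l i" if "l < m" "i \<in> C l" for l i
    using that C_subset component_eq by (auto simp: x_def)
  have block_x: "block_sum x l = c l * s l" if "l < m" for l
    unfolding block_sum_def using x_C[OF that] s that by (simp add: sum_distrib_left)
  have "\<forall>i\<in>V. 0 < x i \<and> x i = (\<Sum>j\<in>V. ctln E \<epsilon> \<delta> i j * x j) + \<theta>"
  proof
    fix i assume "i \<in> V"
    then obtain l where l: "l < m" and i: "i \<in> C l" using component_exists by blast
    let ?p = "cyc_pred m l"
    have Yi: "0 < Y l i" "Y l i = (\<Sum>j\<in>C l. ctln E \<epsilon> \<delta> i j * Y l j) + \<theta>"
      using Y l i by blast+
    have cl: "0 < c l" "c l * ((1 + \<delta>) * s l - \<theta>)
        = (1 + \<delta>) * (\<Sum>k<m. c k * s k) - \<theta> - (\<delta> + \<epsilon>) * (c ?p * s ?p)"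
      using c l by blast+
    have "(\<Sum>j\<in>C l. ctln E \<epsilon> \<delta> i j * x j) = c l * (\<Sum>j\<in>C l. ctln E \<epsilon> \<delta> i j * Y l j)"
      using x_C[OF l] by (simp add: sum_distrib_left algebra_simps)
    then have "(\<Sum>j\<in>V. ctln E \<epsilon> \<delta> i j * x j) + \<theta> = c l * (Y l i - \<theta>)
        - (1 + \<delta>) * ((\<Sum>k<m. c k * s k) - c l * s l) + (\<delta> + \<epsilon>) * (c ?p * s ?p) + \<theta>"
      using ctln_row_sum[OF l i, of x] Yi(2) block_x l cyc_pred_less[of m l] m3 by simp
    also have "\<dots> = c l * Y l i"
      using cl(2) by (simp add: algebra_simps)
    finally show "0 < x i \<and> x i = (\<Sum>j\<in>V. ctln E \<epsilon> \<delta> i j * x j) + \<theta>"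
      using x_C[OF l i] Yi(1) cl(1) by simp
  qed
  moreover have "\<forall>i. i \<notin> V \<longrightarrow> x i = 0" by (simp add: x_def)
  ultimately have "ctln_fixed_point V E \<epsilon> \<delta> \<theta> x \<and> supp V x = V"
    unfolding full_support_fixed_point_iff by blast
  then show ?thesis unfolding has_full_support_fp_def by blast
qed

lemma has_full_support_fp_cyclic_union:
  assumes "\<forall>k<m. has_full_support_fp (C k) E \<epsilon> \<delta> \<theta>"
  shows "has_full_support_fp V E \<epsilon> \<delta> \<theta>"
proof -
  obtain Y where Y: "\<forall>l<m. ctln_fixed_point (C l) E \<epsilon> \<delta> \<theta> (Y l) \<and> supp (C l) (Y l) = C l"
    using assms unfolding has_full_support_fp_def by metis
  define s where "s l = (\<Sum>j\<in>C l. Y l j)" for l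
  have "\<forall>l<m. \<theta> < (1 + \<delta>) * s l \<and> (1 - \<epsilon>) * s l < \<theta>"
    unfolding s_def using full_support_fixed_point_sum_bounds[OF finite_C C_nonempty \<epsilon>_pos \<delta>_pos]
      Y by blast
  then obtain c where "\<forall>l<m. 0 < c l \<and> c l * ((1 + \<delta>) * s l - \<theta>)
      = (1 + \<delta>) * (\<Sum>k<m. c k * s k) - \<theta> - (\<delta> + \<epsilon>) * (c (cyc_pred m l) * s (cyc_pred m l))"
    using cyclic_scaling_solvable[of m \<epsilon> \<delta> \<theta> s] m3 \<epsilon>_pos \<epsilon>_less_1 \<delta>_pos \<theta> by auto
  moreover have "\<forall>l<m. \<forall>i\<in>C l. 0 < Y l i \<and> Y l i = (\<Sum>j\<in>C l. ctln E \<epsilon> \<delta> i j * Y l j) + \<theta>"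
    using Y unfolding full_support_fixed_point_iff by blast
  ultimately show ?thesis
    using has_full_support_fp_of_blocks s_def by blast
qed

definition clique_input :: "('a \<Rightarrow> real) \<Rightarrow> nat \<Rightarrow> real" where
  "clique_input x l = (\<delta> + \<epsilon>) * (block_sum x l + block_sum x (cyc_pred m l))
    - (1 + \<delta>) * (\<Sum>k<m. block_sum x k)"

lemma cliques_row_sum:
  assumes cl: "\<forall>k<m. is_clique (C k) E" and l: "l < m" and i: "i \<in> C l"
  shows "(\<Sum>j\<in>V. ctln E \<epsilon> \<delta> i j * x j) = (1 - \<epsilon>) * x i + clique_input x l"
proof -
  have "(\<Sum>j\<in>C l. ctln E \<epsilon> \<delta> i j * x j) = - (1 - \<epsilon>) * (block_sum x l - x i)"
    unfolding block_sum_def using cl l i finite_C[OF l] by (intro clique_row_sum) auto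
  then show ?thesis
    using ctln_row_sum[OF l i, of x] by (simp add: clique_input_def algebra_simps)
qed

lemma cliques_fixed_point_cases:
  assumes cl: "\<forall>k<m. is_clique (C k) E" and fp: "ctln_fixed_point V E \<epsilon> \<delta> \<theta> y"
    and l: "l < m" and i: "i \<in> C l"
  shows "(0 < y i \<and> \<epsilon> * y i = clique_input y l + \<theta>) \<or> (y i = 0 \<and> clique_input y l + \<theta> \<le> 0)"
proof -
  have row: "(\<Sum>j\<in>V. ctln E \<epsilon> \<delta> i j * y j) + \<theta> = (1 - \<epsilon>) * y i + (clique_input y l + \<theta>)"
    using cliques_row_sum[OF cl l i, of y] by simp
  have "i \<in> V" using C_subset[OF l] i by blast
  from ctln_fixed_point_eq[OF fp this]
  have "y i = max 0 ((1 - \<epsilon>) * y i + (clique_input y l + \<theta>))" unfolding row .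
  moreover have "u = max 0 ((1 - \<epsilon>) * u + a) \<longleftrightarrow> (0 < u \<and> \<epsilon> * u = a) \<or> (u = 0 \<and> a \<le> 0)"
    for u a :: real
    using \<epsilon>_pos by (auto simp: max_def algebra_simps mult_le_0_iff)
  ultimately show ?thesis by blast
qed

lemma cliques_fixed_point_pos:
  assumes cl: "\<forall>k<m. is_clique (C k) E" and fp: "ctln_fixed_point V E \<epsilon> \<delta> \<theta> y"
  shows "\<forall>i\<in>V. 0 < y i"
proof -
  define q where "q l = clique_input y l + \<theta>" for l
  have active: "y i = q l / \<epsilon>" if "l < m" "0 < q l" "i \<in> C l" for l i
    using cliques_fixed_point_cases[OF cl fp that(1,3)] that(2) \<epsilon>_pos
    by (auto simp: q_def field_simps)
  have inactive: "y i = 0" if "l < m" "q l \<le> 0" "i \<in> C l" for l i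
    using cliques_fixed_point_cases[OF cl fp that(1,3)] that(2) mult_pos_pos[OF \<epsilon>_pos, of "y i"]
    by (auto simp: q_def)
  have "\<forall>l<m. 0 < q l"
  proof (rule cyclic_threshold_all_active[OF \<epsilon>_pos \<delta>_pos \<theta>])
    show "\<forall>l<m. 1 \<le> real (card (C l))" using card_C_ge_1 by blast
    show "\<forall>l<m. 0 \<le> block_sum y l"
      using ctln_fixed_point_nonneg[OF fp] by (simp add: block_sum_def sum_nonneg)
    show "\<forall>l<m. q l = (\<delta> + \<epsilon>) * (block_sum y l + block_sum y (cyc_pred m l))
      - (1 + \<delta>) * (\<Sum>k<m. block_sum y k) + \<theta>" by (simp add: q_def clique_input_def)
    show "\<forall>l<m. 0 < q l \<longrightarrow> \<epsilon> * block_sum y l = real (card (C l)) * q l"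
      using active \<epsilon>_pos by (simp add: block_sum_def)
    show "\<forall>l<m. q l \<le> 0 \<longrightarrow> block_sum y l = 0"
      using inactive by (simp add: block_sum_def)
  qed
  show ?thesis
  proof
    fix i assume "i \<in> V"
    then obtain l where "l < m" "i \<in> C l" using component_exists by blast
    with \<open>\<forall>l<m. 0 < q l\<close> active \<epsilon>_pos show "0 < y i" by simp
  qed
qed

lemma cliques_homogeneous_eq_0:
  assumes cl: "\<forall>k<m. is_clique (C k) E"
    and v: "\<forall>i\<in>V. v i = (\<Sum>j\<in>V. ctln E \<epsilon> \<delta> i j * v j)"
  shows "\<forall>i\<in>V. v i = 0"
proof -
  have v_C: "\<epsilon> * v i = clique_input v l" if l: "l < m" and i: "i \<in> C l" for l i
  proof -
    have "v i = (\<Sum>j\<in>V. ctln E \<epsilon> \<delta> i j * v j)" using v C_subset[OF l] i by blast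
    moreover have "(\<Sum>j\<in>V. ctln E \<epsilon> \<delta> i j * v j) = (1 - \<epsilon>) * v i + clique_input v l"
      by (rule cliques_row_sum[OF cl l i])
    moreover have "(1 - \<epsilon>) * v i = v i - \<epsilon> * v i" by (simp add: algebra_simps)
    ultimately show ?thesis by linarith
  qed
  have "\<forall>l<m. block_sum v l = 0"
  proof (rule cyclic_homogeneous_eq_0)
    show "2 \<le> m" using m3 by simp
    show "\<forall>l<m. 1 \<le> real (card (C l))" using card_C_ge_1 by blast
    show "\<forall>l<m. \<epsilon> * block_sum v l = real (card (C l)) * ((\<delta> + \<epsilon>) * (block_sum v l
      + block_sum v (cyc_pred m l)) - (1 + \<delta>) * (\<Sum>k<m. block_sum v k))"
    proof (intro allI impI)
      fix l assume l: "l < m"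
      have "\<epsilon> * block_sum v l = (\<Sum>i\<in>C l. \<epsilon> * v i)"
        by (simp add: block_sum_def sum_distrib_left)
      also have "\<dots> = real (card (C l)) * clique_input v l" using v_C[OF l] by simp
      finally show "\<epsilon> * block_sum v l = real (card (C l)) * ((\<delta> + \<epsilon>) * (block_sum v l
        + block_sum v (cyc_pred m l)) - (1 + \<delta>) * (\<Sum>k<m. block_sum v k))"
        unfolding clique_input_def .
    qed
  qed (use \<epsilon>_pos \<epsilon>_less_1 \<delta>_pos in auto)
  then have "\<forall>l<m. clique_input v l = 0"
    using cyc_pred_less[of m] m3 by (simp add: clique_input_def)
  show ?thesis
  proof
    fix i assume "i \<in> V"
    then obtain l where "l < m" "i \<in> C l" using component_exists by blast
    with \<open>\<forall>l<m. clique_input v l = 0\<close> v_C \<epsilon>_pos show "v i = 0" by fastforce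
  qed
qed

lemma cliques_fixed_point_unique:
  assumes cl: "\<forall>k<m. is_clique (C k) E"
    and x: "ctln_fixed_point V E \<epsilon> \<delta> \<theta> x" and y: "ctln_fixed_point V E \<epsilon> \<delta> \<theta> y"
  shows "y = x"
proof -
  have sx: "supp V x = V" and sy: "supp V y = V"
    using cliques_fixed_point_pos[OF cl x] cliques_fixed_point_pos[OF cl y] by (auto simp: supp_def)
  have x': "\<forall>i\<in>V. 0 < x i \<and> x i = (\<Sum>j\<in>V. ctln E \<epsilon> \<delta> i j * x j) + \<theta>"
    using full_support_fixed_point_iff[THEN iffD1, OF conjI[OF x sx]] by (rule conjunct2)
  have y': "\<forall>i\<in>V. 0 < y i \<and> y i = (\<Sum>j\<in>V. ctln E \<epsilon> \<delta> i j * y j) + \<theta>"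
    using full_support_fixed_point_iff[THEN iffD1, OF conjI[OF y sy]] by (rule conjunct2)
  have "\<forall>i\<in>V. x i - y i = (\<Sum>j\<in>V. ctln E \<epsilon> \<delta> i j * (x j - y j))"
  proof
    fix i assume i: "i \<in> V"
    have "x i = (\<Sum>j\<in>V. ctln E \<epsilon> \<delta> i j * x j) + \<theta>"
      "y i = (\<Sum>j\<in>V. ctln E \<epsilon> \<delta> i j * y j) + \<theta>"
      using bspec[OF x' i] bspec[OF y' i] by blast+
    then have "x i - y i = (\<Sum>j\<in>V. ctln E \<epsilon> \<delta> i j * x j) - (\<Sum>j\<in>V. ctln E \<epsilon> \<delta> i j * y j)"
      by linarith
    then show "x i - y i = (\<Sum>j\<in>V. ctln E \<epsilon> \<delta> i j * (x j - y j))"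
      by (simp add: right_diff_distrib sum_subtractf)
  qed
  then have inside: "\<forall>i\<in>V. x i - y i = 0" by (rule cliques_homogeneous_eq_0[OF cl])
  show ?thesis
  proof
    fix i
    show "y i = x i"
    proof (cases "i \<in> V")
      case True
      with inside show ?thesis by simp
    next
      case False
      with ctln_fixed_point_outside[OF x] ctln_fixed_point_outside[OF y] show ?thesis by simp
    qed
  qed
qed

lemma IminusW_between:
  assumes "k < m" "l < m" "k \<noteq> l" "i \<in> C l" "j \<in> C k"
  shows "IminusW E \<epsilon> \<delta> i j = (if k = cyc_pred m l then 1 - \<epsilon> else 1 + \<delta>)"
proof -
  have "i \<noteq> j" using assms C_disjoint by blast
  then show ?thesis using ctln_between[OF assms] by (simp add: IminusW_def)
qed

text \<open>Every other component sees \<open>C j\<close> through a constant column of \<open>I - W\<close>.\<close>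
lemma left_eigenvector_extend_by_zero:
  assumes j: "j < m"
    and u: "\<forall>k\<in>C j. (\<Sum>i\<in>C j. complex_of_real (IminusW E \<epsilon> \<delta> i k) * u i) = lam * u k"
    and u0: "\<exists>i\<in>C j. u i \<noteq> 0" and sum_u: "(\<Sum>i\<in>C j. u i) = 0"
  shows "is_eigenvalue_on V (\<lambda>i k. IminusW E \<epsilon> \<delta> k i) lam"
proof -
  let ?A = "IminusW E \<epsilon> \<delta>"
  define u' where "u' i = (if i \<in> C j then u i else 0)" for i
  have "\<forall>k\<in>V. (\<Sum>i\<in>V. complex_of_real (?A i k) * u' i) = lam * u' k"
  proof
    fix k assume "k \<in> V"
    have restrict: "(\<Sum>i\<in>V. complex_of_real (?A i k) * u' i) = (\<Sum>i\<in>C j. complex_of_real (?A i k) * u i)"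
      using finite_V C_subset[OF j] by (intro sum.mono_neutral_cong_right) (auto simp: u'_def)
    show "(\<Sum>i\<in>V. complex_of_real (?A i k) * u' i) = lam * u' k"
    proof (cases "k \<in> C j")
      case True
      then show ?thesis using u restrict by (simp add: u'_def)
    next
      case False
      obtain l where l: "l < m" "k \<in> C l" using component_exists \<open>k \<in> V\<close> by blast
      with False have "l \<noteq> j" by blast
      define a where "a = (if l = cyc_pred m j then 1 - \<epsilon> else 1 + \<delta>)"
      have "(\<Sum>i\<in>C j. complex_of_real (?A i k) * u i) = (\<Sum>i\<in>C j. complex_of_real a * u i)"
        using IminusW_between[OF l(1) j \<open>l \<noteq> j\<close> _ l(2)] by (simp add: a_def)
      also have "\<dots> = 0" using sum_u by (simp add: sum_distrib_left[symmetric])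
      finally show ?thesis using restrict False by (simp add: u'_def)
    qed
  qed
  moreover have "\<exists>i\<in>V. u' i \<noteq> 0" using u0 C_subset[OF j] by (auto simp: u'_def)
  ultimately show ?thesis unfolding is_eigenvalue_on_def by blast
qed

text \<open>Uniform in-degree makes the row sums of the component constant, so a left eigenvector for
  an eigenvalue with nonpositive real part is orthogonal to the all-ones vector.\<close>
lemma is_eigenvalue_on_uniform_in_degree_component:
  assumes j: "j < m" and ud: "uniform_in_degree (C j) E"
    and ev: "is_eigenvalue_on (C j) (IminusW E \<epsilon> \<delta>) lam" and re: "Re lam \<le> 0"
  shows "is_eigenvalue_on V (IminusW E \<epsilon> \<delta>) lam"
proof -
  let ?A = "IminusW E \<epsilon> \<delta>"
  obtain u where u0: "\<exists>i\<in>C j. u i \<noteq> 0"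
    and u: "\<forall>k\<in>C j. (\<Sum>i\<in>C j. complex_of_real (?A i k) * u i) = lam * u k"
    using ev is_eigenvalue_on_transpose[OF finite_C[OF j]] unfolding is_eigenvalue_on_def by blast
  obtain d where d: "\<forall>i\<in>C j. card {k\<in>C j. E k i} = d"
    using ud unfolding uniform_in_degree_def by blast
  define r where "r = (1 + \<delta>) * real (card (C j)) - (\<delta> + \<epsilon>) * real d - \<delta>"
  have rows: "\<forall>i\<in>C j. (\<Sum>k\<in>C j. ?A i k) = r"
    using IminusW_row_sum[OF finite_C[OF j]] no_loop C_subset[OF j] d by (auto simp: r_def)
  obtain i0 where i0: "i0 \<in> C j" using C_nonempty[OF j] by blast
  have "?A i0 i0 \<le> (\<Sum>k\<in>C j. ?A i0 k)"
    using finite_C[OF j] i0 IminusW_nonneg[OF \<epsilon>_less_1 \<delta>_pos] by (intro member_le_sum) auto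
  then have "1 \<le> r" using rows i0 by (simp add: IminusW_def)
  then have "lam \<noteq> complex_of_real r" using re by auto
  then have "(\<Sum>i\<in>C j. u i) = 0"
    using left_eigenvector_sum_eq_0[OF rows u] by blast
  from left_eigenvector_extend_by_zero[OF j u u0 this]
  show ?thesis using is_eigenvalue_on_transpose[OF finite_V] by blast
qed

lemma is_eigenvalue_on_quotient:
  assumes N: "\<forall>l<m. \<forall>k<m. \<forall>i\<in>C l. (\<Sum>j\<in>C k. A i j) = N l k"
    and ev: "is_eigenvalue_on {..<m} N lam"
  shows "is_eigenvalue_on V A lam"
proof -
  obtain c where c0: "\<exists>l\<in>{..<m}. c l \<noteq> 0"
    and c: "\<forall>l\<in>{..<m}. (\<Sum>k\<in>{..<m}. complex_of_real (N l k) * c k) = lam * c l"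
    using ev unfolding is_eigenvalue_on_def by blast
  define v where "v i = c (component i)" for i
  have v_C: "v i = c l" if "l < m" "i \<in> C l" for l i
    using that component_eq by (simp add: v_def)
  show ?thesis
    unfolding is_eigenvalue_on_def
  proof (intro exI conjI)
    obtain l i where l: "l < m" "c l \<noteq> 0" and i: "i \<in> C l"
      using c0 C_nonempty by fastforce
    then have "i \<in> V" "v i \<noteq> 0" using v_C C_subset by auto
    then show "\<exists>i\<in>V. v i \<noteq> 0" by blast
    show "\<forall>i\<in>V. (\<Sum>j\<in>V. complex_of_real (A i j) * v j) = lam * v i"
    proof
      fix i assume "i \<in> V"
      then obtain l where l: "l < m" and i: "i \<in> C l" using component_exists by blast
      have "(\<Sum>j\<in>V. complex_of_real (A i j) * v j)
          = (\<Sum>k<m. \<Sum>j\<in>C k. complex_of_real (A i j) * c k)"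
        unfolding sum_V_blocks using v_C by (intro sum.cong refl) auto
      also have "\<dots> = (\<Sum>k<m. complex_of_real (N l k) * c k)"
        using N l i by (simp add: sum_distrib_right[symmetric] flip: of_real_sum)
      also have "\<dots> = lam * v i" using c l v_C[OF l i] by simp
      finally show "(\<Sum>j\<in>V. complex_of_real (A i j) * v j) = lam * v i" .
    qed
  qed
qed

text \<open>The quotient of \<open>I - W\<close> by the partition into cliques, see \<open>cliques_block_row_sum\<close>.\<close>
definition clique_quotient :: "nat \<Rightarrow> nat \<Rightarrow> real" where
  "clique_quotient l k =
    (if k = l then \<epsilon> + (1 - \<epsilon>) * real (card (C l))
     else if k = cyc_pred m l then (1 - \<epsilon>) * real (card (C k))
     else (1 + \<delta>) * real (card (C k)))"

lemma cliques_block_row_sum: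
  assumes cl: "\<forall>k<m. is_clique (C k) E" and "l < m" "k < m" "i \<in> C l"
  shows "(\<Sum>j\<in>C k. IminusW E \<epsilon> \<delta> i j) = clique_quotient l k"
proof (cases "k = l")
  case True
  have "(\<Sum>j\<in>C l. ctln E \<epsilon> \<delta> i j * 1) = - (1 - \<epsilon>) * (real (card (C l)) - 1)"
    using clique_row_sum[of "C l" E i \<epsilon> \<delta> "\<lambda>_. 1"] cl assms finite_C by simp
  then show ?thesis
    using True assms finite_C[of l] by (simp add: IminusW_def sum_subtractf clique_quotient_def algebra_simps)
next
  case False
  then show ?thesis
    using IminusW_between[OF assms(3,2) False assms(4)] by (simp add: clique_quotient_def mult.commute)
qed

lemma clique_quotient_diag_bounds:
  assumes "l < m"
  shows "0 \<le> clique_quotient l l" and "clique_quotient l l \<le> real (card (C l))"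
proof -
  have n1: "1 \<le> real (card (C l))" using card_C_ge_1[OF assms] .
  then have "\<epsilon> \<le> \<epsilon> * real (card (C l))" "0 \<le> (1 - \<epsilon>) * real (card (C l))"
    using mult_left_mono[OF n1, of \<epsilon>] \<epsilon>_pos \<epsilon>_less_1 by simp_all
  then show "0 \<le> clique_quotient l l" "clique_quotient l l \<le> real (card (C l))"
    using \<epsilon>_pos by (simp_all add: clique_quotient_def) (simp_all add: algebra_simps)
qed

lemma clique_quotient_cross_gt:
  assumes lk: "l < m" "k < m" "k \<noteq> l"
  shows "clique_quotient l l * clique_quotient k k < clique_quotient l k * clique_quotient k l"
proof -
  let ?N = clique_quotient
  define n where "n l = real (card (C l))" for l
  have n: "1 \<le> n l" "1 \<le> n k" using card_C_ge_1 lk by (simp_all add: n_def)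
  have "?N l l * ?N k k \<le> n l * n k"
    using clique_quotient_diag_bounds lk n by (intro mult_mono) (auto simp: n_def)
  also have "\<dots> < (1 - \<epsilon>) * (1 + \<delta>) * (n l * n k)"
    using params_product_gt_1 n mult_strict_right_mono[of 1 "(1 - \<epsilon>) * (1 + \<delta>)" "n l * n k"]
    by simp
  also have "\<dots> \<le> ?N l k * ?N k l"
  proof -
    have lo: "(1 - \<epsilon>) * n k \<le> ?N l k" "(1 - \<epsilon>) * n l \<le> ?N k l"
      using lk \<epsilon>_pos \<delta>_pos n by (auto simp: clique_quotient_def n_def intro: mult_right_mono)
    have "k \<noteq> cyc_pred m l \<or> l \<noteq> cyc_pred m k"
      using cyc_pred_cyc_pred_neq[OF m3 lk(1)] by auto
    then show ?thesis
    proof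
      assume "k \<noteq> cyc_pred m l"
      then have "?N l k = (1 + \<delta>) * n k" using lk by (simp add: clique_quotient_def n_def)
      then show ?thesis
        using lo(2) \<delta>_pos n mult_left_mono[of "(1 - \<epsilon>) * n l" "?N k l" "(1 + \<delta>) * n k"]
        by (simp add: algebra_simps)
    next
      assume "l \<noteq> cyc_pred m k"
      then have "?N k l = (1 + \<delta>) * n l" using lk by (simp add: clique_quotient_def n_def)
      then show ?thesis
        using lo(1) \<delta>_pos n mult_right_mono[of "(1 - \<epsilon>) * n k" "?N l k" "(1 + \<delta>) * n l"]
        by (simp add: algebra_simps)
    qed
  qed
  finally show ?thesis .
qed

lemma clique_quotient_trace_square:
  "(\<Sum>l<m. clique_quotient l l)\<^sup>2 < (\<Sum>l<m. \<Sum>k<m. clique_quotient l k * clique_quotient k l)"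
proof -
  let ?N = clique_quotient
  have le: "?N l l * ?N k k \<le> ?N l k * ?N k l" if "l < m" "k < m" for l k
    using clique_quotient_cross_gt[OF that] by (cases "k = l") auto
  have "(\<Sum>l<m. \<Sum>k<m. ?N l l * ?N k k) < (\<Sum>l<m. \<Sum>k<m. ?N l k * ?N k l)"
  proof (rule sum_strict_mono_ex1)
    show "\<forall>l\<in>{..<m}. (\<Sum>k<m. ?N l l * ?N k k) \<le> (\<Sum>k<m. ?N l k * ?N k l)"
      using le by (intro ballI sum_mono) auto
    show "\<exists>l\<in>{..<m}. (\<Sum>k<m. ?N l l * ?N k k) < (\<Sum>k<m. ?N l k * ?N k l)"
    proof
      show "(\<Sum>k<m. ?N 0 0 * ?N k k) < (\<Sum>k<m. ?N 0 k * ?N k 0)"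
      proof (rule sum_strict_mono_ex1)
        show "\<forall>k\<in>{..<m}. ?N 0 0 * ?N k k \<le> ?N 0 k * ?N k 0"
          using le m3 by auto
        show "\<exists>k\<in>{..<m}. ?N 0 0 * ?N k k < ?N 0 k * ?N k 0"
          using clique_quotient_cross_gt[of 0 1] m3 by auto
      qed simp
      show "0 \<in> {..<m}" using m3 by simp
    qed
  qed simp
  then show ?thesis by (simp add: power2_eq_square sum_product)
qed

lemma cliques_unstable_eigenvalue:
  assumes cl: "\<forall>k<m. is_clique (C k) E"
  shows "\<exists>lam. is_eigenvalue_on V (IminusW E \<epsilon> \<delta>) lam \<and> Re lam \<le> 0"
proof -
  define M where "M = mat m m (\<lambda>(l, k). complex_of_real (clique_quotient l k))"
  have M: "M \<in> carrier_mat m m" by (simp add: M_def)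
  have "mat_trace M = complex_of_real (\<Sum>l<m. clique_quotient l l)"
    by (simp add: M_def mat_trace_def)
  moreover have "mat_trace (M * M)
      = complex_of_real (\<Sum>l<m. \<Sum>k<m. clique_quotient l k * clique_quotient k l)"
    by (simp add: M_def mat_trace_def scalar_prod_def lessThan_atLeast0)
  ultimately obtain lam where "eigenvalue M lam" "Re lam \<le> 0"
    using eigenvalue_Re_nonpos_if_trace_square[OF M] clique_quotient_trace_square by auto
  moreover have "bij_betw id {0..<m} {..<m}" by (simp add: lessThan_atLeast0)
  ultimately have "is_eigenvalue_on {..<m} clique_quotient lam"
    using is_eigenvalue_on_iff_eigenvalue[of id m "{..<m}" clique_quotient lam] by (simp add: M_def)
  then have "is_eigenvalue_on V (IminusW E \<epsilon> \<delta>) lam"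
    using cliques_block_row_sum[OF cl] by (intro is_eigenvalue_on_quotient) auto
  with \<open>Re lam \<le> 0\<close> show ?thesis by blast
qed

end

theorem theorem5:
  fixes V :: "'a set" and E :: "'a \<Rightarrow> 'a \<Rightarrow> bool" and m :: nat and C :: "nat \<Rightarrow> 'a set"
    and \<epsilon> \<delta> \<theta> :: real
  assumes graph: "simple_digraph V E"
    and m3: "m \<ge> 3"
    and cu: "cyclic_union V E m C"
    and legal: "legal_params \<epsilon> \<delta>"
    and theta: "\<theta> > 0"
    and nondeg: "nondegenerate V E \<epsilon> \<delta> \<theta>"
    and nondeg_comp: "\<forall>k<m. nondegenerate (C k) E \<epsilon> \<delta> \<theta>"
  shows
    "((\<exists>k<m. \<not> has_full_support_fp (C k) E \<epsilon> \<delta> \<theta>) \<longrightarrow>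
        \<not> has_full_support_fp V E \<epsilon> \<delta> \<theta>)
     \<and> (((\<forall>k<m. has_full_support_fp (C k) E \<epsilon> \<delta> \<theta>) \<and>
          (\<exists>j<m. uniform_in_degree (C j) E \<and>
             (\<exists>y. ctln_fixed_point (C j) E \<epsilon> \<delta> \<theta> y \<and> supp (C j) y = C j \<and>
                  \<not> stable_fp (C j) E \<epsilon> \<delta> y))) \<longrightarrow>
        (\<exists>x. ctln_fixed_point V E \<epsilon> \<delta> \<theta> x \<and> supp V x = V \<and> \<not> stable_fp V E \<epsilon> \<delta> x))
     \<and> ((\<forall>k<m. is_clique (C k) E) \<longrightarrow>
        (\<exists>x. ctln_fixed_point V E \<epsilon> \<delta> \<theta> x \<and> supp V x = V \<and> \<not> stable_fp V E \<epsilon> \<delta> x \<and>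
             (\<forall>y. ctln_fixed_point V E \<epsilon> \<delta> \<theta> y \<longrightarrow> y = x)))
     \<and> (((\<exists>k<m. \<not> has_full_support_fp (C k) E \<epsilon> \<delta> \<theta>) \<or>
          ((\<forall>k<m. has_full_support_fp (C k) E \<epsilon> \<delta> \<theta>) \<and>
           (\<exists>j<m. uniform_in_degree (C j) E \<and>
             (\<exists>y. ctln_fixed_point (C j) E \<epsilon> \<delta> \<theta> y \<and> supp (C j) y = C j \<and>
                  \<not> stable_fp (C j) E \<epsilon> \<delta> y))) \<or>
          (\<forall>k<m. is_clique (C k) E)) \<longrightarrow>
        \<not> stable_motif V E \<epsilon> \<delta> \<theta>)"
proof -
  interpret cyclic_union_ctln V E m C \<epsilon> \<delta> \<theta>
    using graph m3 cu legal theta by unfold_locales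
  define unstable where
    "unstable \<longleftrightarrow> (\<exists>lam. is_eigenvalue_on V (IminusW E \<epsilon> \<delta>) lam \<and> Re lam \<le> 0)"
  have unstable_fp: "\<exists>x. ctln_fixed_point V E \<epsilon> \<delta> \<theta> x \<and> supp V x = V \<and> \<not> stable_fp V E \<epsilon> \<delta> x"
    if "has_full_support_fp V E \<epsilon> \<delta> \<theta> \<and> unstable"
    using that not_stable_fp_if_eigenvalue unfolding unstable_def has_full_support_fp_def by blast
  have no_motif: "\<not> stable_motif V E \<epsilon> \<delta> \<theta>" if "\<not> has_full_support_fp V E \<epsilon> \<delta> \<theta> \<or> unstable"
    using that not_stable_fp_if_eigenvalue
    unfolding unstable_def stable_motif_def has_full_support_fp_def by blast
  have i: "\<not> has_full_support_fp V E \<epsilon> \<delta> \<theta>" if "\<exists>k<m. \<not> has_full_support_fp (C k) E \<epsilon> \<delta> \<theta>"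
    using that has_full_support_fp_component by blast
  have ii: "has_full_support_fp V E \<epsilon> \<delta> \<theta> \<and> unstable"
    if "\<forall>k<m. has_full_support_fp (C k) E \<epsilon> \<delta> \<theta>" and "\<exists>j<m. uniform_in_degree (C j) E \<and>
      (\<exists>y. ctln_fixed_point (C j) E \<epsilon> \<delta> \<theta> y \<and> supp (C j) y = C j \<and> \<not> stable_fp (C j) E \<epsilon> \<delta> y)"
    using that has_full_support_fp_cyclic_union is_eigenvalue_on_uniform_in_degree_component
    unfolding unstable_def stable_fp_def by (metis not_less)
  have iii: "has_full_support_fp V E \<epsilon> \<delta> \<theta> \<and> unstable" if "\<forall>k<m. is_clique (C k) E"
    using that has_full_support_fp_cyclic_union clique_has_full_support_fp finite_C
      \<epsilon>_pos \<epsilon>_less_1 theta cliques_unstable_eigenvalue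
    unfolding unstable_def by blast
  show ?thesis
    using i ii iii unstable_fp no_motif cliques_fixed_point_unique by meson
qed

end
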